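(* Assume $F_L$ and $F_H$ are regular and $F_L$ is supported on $[0,\bar L]$ with $\bar L<\infty$. For $s\in\{L,H\}$ let $r^\star_s$ be the unique solution of $r-\frac{1-F_s(r)}{f_s(r)}=0$. Let $\epsilon$ satisfy $0<\epsilon<r^\star_H-r^\star_L$, and let $\alpha=\min_i\alpha_i>0$. Let $\rho\ge\bar L$ satisfy $1-F_H(\rho)>0$. Define (with $\log$ the natural logarithm) $$n_0\equiv 1+\frac{1.59\,\log\big(2(r^\star_H-r^\star_L)/\epsilon\big)}{1-F_H(\rho)},\qquad T_0\equiv\frac{2(r^\star_H-r^\star_L)}{\epsilon}\left\lceil\frac{n_0-1}{(n-1)\alpha}\right\rceil.$$ Then for all $n\ge n_0$ and $T\ge T_0$ the threshold mechanism ${\cal M}(\rho,r^\star_L,r^\star_H)$ is $\epsilon$-incentive compatible. Moreover, for each $s\in\{L,H\}$, its expected revenue under truthful bidding is at least $(\mathrm{Revenue}({\cal M}_1^s)-\epsilon)\,T$. Here ${\cal M}_1^s$ is the optimal single-round mechanism that knows $s$, which is the second price auction with reserve $r^\star_s$.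
   Context: Setting: a seller sells $T>1$ items, one per round $t=1,\dots,T$, to $n\ge1$ agents. All items share a type $s\in\{L,H\}$, which has prior probabilities $p_L,p_H$. The type $s$ is known to the agents but not to the seller. Conditional on $s$, agent $i$'s valuation $v_i$ is drawn independently from $F_s$ (density $f_s$) and is fixed across rounds. In each round $t$, agent $i$ participates independently (across agents and rounds) with probability $\alpha_i$. It learns its participation indicator $x_{it}$ at the start of round $t$. $T$, $p_L$, $p_H$ and the $\alpha_i$ are common knowledge. Each agent knows only its own valuation. Each round runs a second price auction with reserve $r_t$ among participants: if all bids are below $r_t$ there is no sale; otherwise a highest bidder (ties broken uniformly at random) wins and pays the maximum of $r_t$ and the highest other bid. A bidding strategy maps $v_i$, agent $i$'s own observed history (past reserves and its own participation, bids, allocations, payments) and the current reserve to a bid. Utility is $U_i=\mathbb{E}[\sum_{t=1}^T(v_iq_{it}-p_{it})]$, with $q_{it}$ the allocation indicator and $p_{it}$ the payment. The truthful strategy bids $v_i$ whenever participating. A strategy $B_i$ is an $\epsilon$-best-response to $B_{-i}$ if, for all $s$ and all $v_i$ in the support of $F_s$, $U_i(v_i,s,B_i,B_{-i})\ge U_i(v_i,s,\mathrm{BR},B_{-i})-T\alpha_i\epsilon$, where $\mathrm{BR}$ is a best response. A mechanism is $\epsilon$-incentive compatible if truthful bidding is an $\epsilon$-best-response to truthful bidding by the others, for all $s$ and all $v_i$ in the support of $F_s$. $F_s$ is regular if $F_s(v)$ and $v-(1-F_s(v))/f_s(v)$ are strictly increasing on the support. The threshold mechanism ${\cal M}(\rho,r_L,r_H)$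 uses reserve $r_L$ until some agent bids above $\rho$. In all subsequent rounds the reserve is $r_H$. If no bid exceeds $\rho$, the reserve stays $r_L$ throughout. *)

theory Defs
  imports "HOL-Probability.Probability"
begin

datatype itype = L | H

text \<open>An agent's observation in one round:
  (reserve, participated, own bid (0 if absent), allocated, own payment).\<close>
type_synonym obs = "real \<times> bool \<times> real \<times> bool \<times> real"

text \<open>A bidding strategy: own valuation, own observed history (chronological),
  current reserve \<mapsto> bid.\<close>
type_synonym strategy = "real \<Rightarrow> obs list \<Rightarrow> real \<Rightarrow> real"

text \<open>Bid vector of a round seen by the seller (None = not participating).\<close>
type_synonym bidvec = "nat \<Rightarrow> real option"

text \<open>A reserve rule: seller's history of bid vectors \<mapsto> reserve of the current round.\<close>
type_synonym mechanism = "bidvec list \<Rightarrow> real"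

definition threshold_mech :: "real \<Rightarrow> real \<Rightarrow> real \<Rightarrow> mechanism" where
  "threshold_mech \<rho> rL rH hist =
     (if \<exists>bv \<in> set hist. \<exists>j b. bv j = Some b \<and> b > \<rho> then rH else rL)"

definition truthful :: strategy where
  "truthful v h r = v"

definition sale :: "nat set \<Rightarrow> (nat \<Rightarrow> real) \<Rightarrow> real \<Rightarrow> bool" where
  "sale P b r \<longleftrightarrow> P \<noteq> {} \<and> r \<le> Max (b ` P)"

definition winners :: "nat set \<Rightarrow> (nat \<Rightarrow> real) \<Rightarrow> nat set" where
  "winners P b = {j \<in> P. b j = Max (b ` P)}"

definition price :: "nat set \<Rightarrow> (nat \<Rightarrow> real) \<Rightarrow> real \<Rightarrow> nat \<Rightarrow> real" where
  "price P b r w = (if P - {w} = {} then r else max r (Max (b ` (P - {w}))))"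

text \<open>Expected total of a per-round reward g(winner option, payment) over the k remaining
  rounds, given the realised valuations v, averaging over independent participation
  (agent j participates with probability \<alpha> j) and uniform tie breaking.\<close>
fun exp_total :: "nat \<Rightarrow> (nat \<Rightarrow> real) \<Rightarrow> mechanism \<Rightarrow> (nat \<Rightarrow> strategy) \<Rightarrow> (nat \<Rightarrow> real)
     \<Rightarrow> (nat option \<Rightarrow> real \<Rightarrow> real) \<Rightarrow> nat \<Rightarrow> bidvec list \<Rightarrow> (nat \<Rightarrow> obs list) \<Rightarrow> real" where
  "exp_total n \<alpha> M B v g 0 sh hs = 0"
| "exp_total n \<alpha> M B v g (Suc k) sh hs =
     (\<Sum>P\<in>Pow {..<n}. (\<Prod>j\<in>P. \<alpha> j) * (\<Prod>j\<in>{..<n} - P. 1 - \<alpha> j) *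
       (let r = M sh;
            b = (\<lambda>j. B j (v j) (hs j) r);
            bv = (\<lambda>j. if j \<in> P then Some (b j) else None)
        in if sale P b r then
             (\<Sum>w\<in>winners P b. (1 / real (card (winners P b))) *
                (g (Some w) (price P b r w) +
                 exp_total n \<alpha> M B v g k (sh @ [bv])
                   (\<lambda>j. hs j @ [(r, j \<in> P, if j \<in> P then b j else 0, j = w,
                                 if j = w then price P b r w else 0)])))
           else g None 0 + exp_total n \<alpha> M B v g k (sh @ [bv])
                   (\<lambda>j. hs j @ [(r, j \<in> P, if j \<in> P then b j else 0, False, 0)])))"

definition valdist :: "(itype \<Rightarrow> real \<Rightarrow> real) \<Rightarrow> itype \<Rightarrow> real measure" where
  "valdist f s = density lborel (\<lambda>x. ennreal (f s x))"

definition cdf :: "(itype \<Rightarrow> real \<Rightarrow> real) \<Rightarrow> itype \<Rightarrow> real \<Rightarrow> real" where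
  "cdf f s x = measure (valdist f s) {..x}"

definition msupport :: "real measure \<Rightarrow> real set" where
  "msupport M = {x. \<forall>e>0. measure M (ball x e) > 0}"

definition virtual_value :: "(itype \<Rightarrow> real \<Rightarrow> real) \<Rightarrow> itype \<Rightarrow> real \<Rightarrow> real" where
  "virtual_value f s v = v - (1 - cdf f s v) / f s v"

definition regular :: "(itype \<Rightarrow> real \<Rightarrow> real) \<Rightarrow> itype \<Rightarrow> bool" where
  "regular f s \<longleftrightarrow> strict_mono_on (msupport (valdist f s)) (cdf f s)
                  \<and> strict_mono_on (msupport (valdist f s)) (virtual_value f s)"

definition utility :: "nat \<Rightarrow> (nat \<Rightarrow> real) \<Rightarrow> mechanism \<Rightarrow> nat \<Rightarrow> (itype \<Rightarrow> real \<Rightarrow> real)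
     \<Rightarrow> nat \<Rightarrow> real \<Rightarrow> itype \<Rightarrow> strategy \<Rightarrow> (nat \<Rightarrow> strategy) \<Rightarrow> real" where
  "utility n \<alpha> M T f i vi s Bi B =
     (\<integral>w. exp_total n \<alpha> M (B(i := Bi)) (w(i := vi))
            (\<lambda>ow p. case ow of None \<Rightarrow> 0 | Some j \<Rightarrow> if j = i then vi - p else 0)
            T [] (\<lambda>_. [])
        \<partial>(PiM ({..<n} - {i}) (\<lambda>_. valdist f s)))"

text \<open>Epsilon-best-response (the best-response utility is the supremum over all strategies).\<close>
definition eps_best_response :: "nat \<Rightarrow> (nat \<Rightarrow> real) \<Rightarrow> mechanism \<Rightarrow> nat \<Rightarrow> (itype \<Rightarrow> real \<Rightarrow> real)
     \<Rightarrow> real \<Rightarrow> nat \<Rightarrow> strategy \<Rightarrow> (nat \<Rightarrow> strategy) \<Rightarrow> bool" where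
  "eps_best_response n \<alpha> M T f \<epsilon> i Bi B \<longleftrightarrow>
     (\<forall>s. \<forall>vi \<in> msupport (valdist f s). \<forall>B'.
        utility n \<alpha> M T f i vi s B' B - real T * \<alpha> i * \<epsilon> \<le> utility n \<alpha> M T f i vi s Bi B)"

definition eps_IC :: "nat \<Rightarrow> (nat \<Rightarrow> real) \<Rightarrow> mechanism \<Rightarrow> nat \<Rightarrow> (itype \<Rightarrow> real \<Rightarrow> real)
     \<Rightarrow> real \<Rightarrow> bool" where
  "eps_IC n \<alpha> M T f \<epsilon> \<longleftrightarrow>
     (\<forall>i<n. eps_best_response n \<alpha> M T f \<epsilon> i truthful (\<lambda>_. truthful))"

definition revenue :: "nat \<Rightarrow> (nat \<Rightarrow> real) \<Rightarrow> mechanism \<Rightarrow> nat \<Rightarrow> (itype \<Rightarrow> real \<Rightarrow> real)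
     \<Rightarrow> itype \<Rightarrow> real" where
  "revenue n \<alpha> M T f s =
     (\<integral>v. exp_total n \<alpha> M (\<lambda>_. truthful) v
            (\<lambda>ow p. case ow of None \<Rightarrow> 0 | Some _ \<Rightarrow> p) T [] (\<lambda>_. [])
        \<partial>(PiM {..<n} (\<lambda>_. valdist f s)))"

end

(*
  In every round the mechanism runs a second price auction, in which truthful bidding is a
  dominant strategy and a higher reserve never helps a bidder.  Truthful bidding therefore earns
  at least the one round utility at reserve rH in every round, and any strategy earns at most
  alpha_i (rH - rL) more than that in expectation in a round played at reserve rL.  Whatever
  the deviator does, the reserve rises to rH as soon as some other agent with valuation above rho
  participates.

  Since rho >= Lbar, under type L no valuation exceeds rho: the reserve stays rL forever and
  truthful bidding is exactly optimal.  Under type H, agent j has participated within the first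
  t rounds with a valuation above rho with probability (1 - (1 - alpha_j)^t) (1 - F_H rho), so
  the expected number of rounds at reserve rL is at most the sum over t < T of the products of
  the complementary probabilities, and the choice of n0 and T0 (via 1 - y <= exp (-y)) makes
  it at most epsilon T / (rH - rL).

  The revenue bound is the same count: a round at reserve rH earns the revenue of the one round
  auction with reserve rH, and a round at reserve rL loses at most rH - rL against it.
*)
theory Submission
  imports Defs
begin

section \<open>The expected number of rounds at the low reserve\<close>

lemma exp_minus_one_le: "exp (-1::real) \<le> 59/159"
proof -
  have "\<bar>exp 1 - 5837465777 / 2147483648\<bar> \<le> (inverse (2 ^ 32) :: real)"
    by (rule e_approx_32)
  then have "159/59 \<le> exp (1::real)"
    using abs_le_D2 by fastforce
  then have "inverse (exp 1) \<le> inverse (159/59 :: real)"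
    by (intro le_imp_inverse_le) auto
  then show ?thesis
    by (simp add: exp_minus)
qed

lemma one_minus_exp_minus_ge:
  assumes "0 \<le> y" "y \<le> (1::real)"
  shows "y * (1 - exp (-1)) \<le> 1 - exp (-y)"
proof -
  have "exp ((1 - y) *\<^sub>R 0 + y *\<^sub>R (-1)) \<le> (1 - y) * exp 0 + y * exp (-1)"
    using assms by (intro convex_onD[OF exp_convex]) auto
  then show ?thesis
    by (simp add: algebra_simps)
qed

definition expected_untriggered_rounds :: "(nat \<Rightarrow> real) \<Rightarrow> real \<Rightarrow> nat set \<Rightarrow> nat \<Rightarrow> real" where
  "expected_untriggered_rounds \<alpha> p J T = (\<Sum>t<T. \<Prod>j\<in>J. 1 - (1 - (1 - \<alpha> j) ^ t) * p)"

lemma ln_le_expected_triggers: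
  fixes x p m \<alpha>m :: real and C :: nat
  assumes x: "1 < x" and p: "0 < p" and \<alpha>m: "0 < \<alpha>m" "\<alpha>m \<le> 1"
    and m: "1.59 * ln x / p \<le> m"
    and C: "(1.59 * ln x / p) / (m * \<alpha>m) \<le> real C"
  shows "ln x \<le> m * p * (1 - (1 - \<alpha>m) ^ C)"
proof -
  define y where "y = 1.59 * ln x / (m * p)"
  have "0 < 1.59 * ln x / p"
    using x p by simp
  then have m_pos: "0 < m"
    using m by linarith
  have y: "0 < y" "y \<le> 1"
    using m x p m_pos by (auto simp: y_def field_simps)
  have "y \<le> \<alpha>m * real C"
    using C \<alpha>m m_pos p by (simp add: y_def field_simps)
  have "(1 - \<alpha>m) ^ C \<le> exp (- \<alpha>m) ^ C"
    using \<alpha>m by (intro power_mono) (auto simp: exp_ge_add_one_self[of "- \<alpha>m", simplified])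
  also have "\<dots> = exp (- (\<alpha>m * real C))"
    by (simp add: exp_of_nat_mult[symmetric] mult.commute)
  also have "\<dots> \<le> exp (- y)"
    using \<open>y \<le> \<alpha>m * real C\<close> by simp
  finally have "y * (1 - exp (-1)) \<le> 1 - (1 - \<alpha>m) ^ C"
    using one_minus_exp_minus_ge[OF less_imp_le y(2)] y by linarith
  \<comment> \<open>this is where the constant comes from: \<open>1.59 * (1 - exp (-1)) \<ge> 1\<close>\<close>
  moreover have "ln x \<le> 1.59 * ln x * (1 - exp (-1))"
    using exp_minus_one_le x by (simp add: algebra_simps)
  ultimately show ?thesis
    using m_pos p by (simp add: y_def field_simps)
qed

lemma untriggered_factor_bounds:
  fixes a p :: real
  assumes "0 \<le> a" "a \<le> 1" "0 \<le> p" "p \<le> 1"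
  shows "0 \<le> 1 - (1 - (1 - a) ^ t) * p" "1 - (1 - (1 - a) ^ t) * p \<le> 1"
proof -
  have "0 \<le> (1 - a) ^ t" "(1 - a) ^ t \<le> 1"
    using assms by (auto intro: power_le_one)
  then have "0 \<le> (1 - (1 - a) ^ t) * p" "(1 - (1 - a) ^ t) * p \<le> 1"
    using assms by (auto intro: mult_le_one)
  then show "0 \<le> 1 - (1 - (1 - a) ^ t) * p" "1 - (1 - (1 - a) ^ t) * p \<le> 1"
    by linarith+
qed

lemma untriggered_prob_le_inverse:
  fixes x p m \<alpha>m :: real and C t :: nat
  assumes x: "1 < x" and p: "0 < p" "p \<le> 1" and \<alpha>m: "0 < \<alpha>m" "\<alpha>m \<le> 1"
    and m: "1.59 * ln x / p \<le> m"
    and C: "(1.59 * ln x / p) / (m * \<alpha>m) \<le> real C" "C \<le> t"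
    and J: "m \<le> real (card J)" "\<And>j. j \<in> J \<Longrightarrow> \<alpha>m \<le> \<alpha> j \<and> \<alpha> j \<le> 1"
  shows "(\<Prod>j\<in>J. 1 - (1 - (1 - \<alpha> j) ^ t) * p) \<le> 1 / x"
proof -
  define a where "a = (1 - (1 - \<alpha>m) ^ C) * p"
  have "(1 - \<alpha>m) ^ C \<le> 1"
    using \<alpha>m by (intro power_le_one) auto
  then have "0 \<le> a"
    using p by (simp add: a_def)
  have "(\<Prod>j\<in>J. 1 - (1 - (1 - \<alpha> j) ^ t) * p) \<le> (\<Prod>j\<in>J. exp (- a))"
  proof (rule prod_mono)
    fix j assume "j \<in> J"
    then have "(1 - \<alpha> j) ^ t \<le> (1 - \<alpha>m) ^ t"
      using J(2) by (intro power_mono) auto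
    also have "\<dots> \<le> (1 - \<alpha>m) ^ C"
      using C(2) \<alpha>m by (intro power_decreasing) auto
    finally have "1 - (1 - (1 - \<alpha> j) ^ t) * p \<le> 1 - a"
      using p by (simp add: a_def mult_right_mono)
    also have "\<dots> \<le> exp (- a)"
      using exp_ge_add_one_self[of "- a"] by simp
    finally show "0 \<le> 1 - (1 - (1 - \<alpha> j) ^ t) * p \<and> 1 - (1 - (1 - \<alpha> j) ^ t) * p \<le> exp (- a)"
      using untriggered_factor_bounds[of "\<alpha> j" p t] J(2)[OF \<open>j \<in> J\<close>] \<alpha>m p by auto
  qed
  also have "\<dots> = exp (- (real (card J) * a))"
    by (simp add: exp_of_nat_mult[symmetric])
  also have "\<dots> \<le> exp (- (m * a))"
    using J(1) \<open>0 \<le> a\<close> by (simp add: mult_right_mono)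
  also have "\<dots> \<le> exp (- ln x)"
    using ln_le_expected_triggers[OF x p(1) \<alpha>m m C(1)] by (simp add: a_def mult_ac)
  also have "\<dots> = 1 / x"
    using x by (simp add: exp_minus inverse_eq_divide)
  finally show ?thesis .
qed

lemma expected_untriggered_rounds_le:
  fixes x p m \<alpha>m :: real and C T :: nat
  assumes x: "1 < x" and p: "0 < p" "p \<le> 1" and \<alpha>m: "0 < \<alpha>m" "\<alpha>m \<le> 1"
    and m: "1.59 * ln x / p \<le> m"
    and C: "(1.59 * ln x / p) / (m * \<alpha>m) \<le> real C"
    and J: "m \<le> real (card J)" "\<And>j. j \<in> J \<Longrightarrow> \<alpha>m \<le> \<alpha> j \<and> \<alpha> j \<le> 1"
    and T: "x * real C \<le> real T"
  shows "expected_untriggered_rounds \<alpha> p J T \<le> 2 * real T / x"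
proof -
  have "expected_untriggered_rounds \<alpha> p J T \<le> (\<Sum>t<T. (if t < C then 1 else 0) + 1 / x)"
    unfolding expected_untriggered_rounds_def
  proof (rule sum_mono)
    fix t
    have "(\<Prod>j\<in>J. 1 - (1 - (1 - \<alpha> j) ^ t) * p) \<le> 1"
      using untriggered_factor_bounds J(2) \<alpha>m p by (intro prod_le_1) (meson order_trans less_imp_le)
    moreover have "C \<le> t \<Longrightarrow> (\<Prod>j\<in>J. 1 - (1 - (1 - \<alpha> j) ^ t) * p) \<le> 1 / x"
      by (rule untriggered_prob_le_inverse[OF x p \<alpha>m m C _ J])
    ultimately show "(\<Prod>j\<in>J. 1 - (1 - (1 - \<alpha> j) ^ t) * p) \<le> (if t < C then 1 else 0) + 1 / x"
      using x by (cases "t < C") (auto simp: add_increasing2)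
  qed
  also have "\<dots> = real (card ({..<T} \<inter> {t. t < C})) + real T / x"
    by (simp add: sum.distrib sum.If_cases)
  also have "\<dots> \<le> real C + real T / x"
    using card_mono[of "{..<C}" "{..<T} \<inter> {t. t < C}"] by auto
  also have "\<dots> \<le> 2 * real T / x"
    using T x by (simp add: field_simps)
  finally show ?thesis .
qed

section \<open>Random participation\<close>

definition participation_prob :: "nat \<Rightarrow> (nat \<Rightarrow> real) \<Rightarrow> nat set \<Rightarrow> real" where
  "participation_prob n \<alpha> P = (\<Prod>j\<in>P. \<alpha> j) * (\<Prod>j\<in>{..<n} - P. 1 - \<alpha> j)"

definition prob_none_participates :: "nat \<Rightarrow> (nat \<Rightarrow> real) \<Rightarrow> (nat \<Rightarrow> bool) \<Rightarrow> real" where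
  "prob_none_participates n \<alpha> Q = (\<Prod>j<n. if Q j then 1 - \<alpha> j else 1)"

lemma participation_prob_nonneg:
  assumes "\<alpha> ` {..<n} \<subseteq> {0..1}" "P \<subseteq> {..<n}"
  shows "0 \<le> participation_prob n \<alpha> P"
  unfolding participation_prob_def using assms
  by (intro mult_nonneg_nonneg prod_nonneg) (auto simp: image_subset_iff)

lemma sum_participation_prob_prod:
  "(\<Sum>P\<in>Pow {..<n}. participation_prob n \<alpha> P * (\<Prod>j<n. h j (j \<in> P)))
     = (\<Prod>j<n. \<alpha> j * h j True + (1 - \<alpha> j) * h j False)"
proof -
  have "(\<Prod>j<n. \<alpha> j * h j True + (1 - \<alpha> j) * h j False)
     = (\<Sum>P\<in>Pow {..<n}. (\<Prod>j\<in>P. \<alpha> j * h j True) * (\<Prod>j\<in>{..<n} - P. (1 - \<alpha> j) * h j False))"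
    by (rule prod_add) simp
  also have "\<dots> = (\<Sum>P\<in>Pow {..<n}. participation_prob n \<alpha> P * (\<Prod>j<n. h j (j \<in> P)))"
  proof (rule sum.cong[OF refl])
    fix P assume "P \<in> Pow {..<n}"
    then have "(\<Prod>j<n. h j (j \<in> P)) = (\<Prod>j\<in>{..<n} - P. h j (j \<in> P)) * (\<Prod>j\<in>P. h j (j \<in> P))"
      by (auto simp: prod.subset_diff)
    also have "\<dots> = (\<Prod>j\<in>{..<n} - P. h j False) * (\<Prod>j\<in>P. h j True)"
      by (intro arg_cong2[where f = "(*)"] prod.cong) auto
    finally show "(\<Prod>j\<in>P. \<alpha> j * h j True) * (\<Prod>j\<in>{..<n} - P. (1 - \<alpha> j) * h j False)
        = participation_prob n \<alpha> P * (\<Prod>j<n. h j (j \<in> P))"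
      by (simp add: participation_prob_def prod.distrib mult_ac)
  qed
  finally show ?thesis ..
qed

lemma sum_participation_prob_const: "(\<Sum>P\<in>Pow {..<n}. participation_prob n \<alpha> P * c) = c"
  using sum_participation_prob_prod[of n \<alpha> "\<lambda>_ _. 1"] by (simp add: sum_distrib_right[symmetric])

lemma sum_participation_prob: "(\<Sum>P\<in>Pow {..<n}. participation_prob n \<alpha> P) = 1"
  using sum_participation_prob_const[of n \<alpha> 1] by simp

lemma sum_participation_prob_add_const:
  "(\<Sum>P\<in>Pow {..<n}. participation_prob n \<alpha> P * (X P + c))
     = (\<Sum>P\<in>Pow {..<n}. participation_prob n \<alpha> P * X P) + c"
  by (simp add: distrib_left sum.distrib sum_participation_prob_const)

lemma sum_participation_prob_member:
  assumes "i < n"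
  shows "(\<Sum>P\<in>Pow {..<n}. participation_prob n \<alpha> P * (if i \<in> P then c else 0)) = \<alpha> i * c"
proof -
  let ?h = "\<lambda>j b. if j = i then (if b then c else 0) else (1::real)"
  have "\<And>P. (\<Prod>j<n. ?h j (j \<in> P)) = (if i \<in> P then c else 0)"
    using assms by (subst prod.delta) auto
  moreover have "(\<Prod>j<n. \<alpha> j * ?h j True + (1 - \<alpha> j) * ?h j False)
      = (\<Prod>j<n. if j = i then \<alpha> i * c else 1)"
    by (intro prod.cong) auto
  ultimately show ?thesis
    using sum_participation_prob_prod[of n \<alpha> ?h] assms by (simp add: prod.delta)
qed

lemma sum_participation_prob_avoid:
  "(\<Sum>P\<in>Pow {..<n}. participation_prob n \<alpha> P * (if \<forall>j\<in>P. \<not> Q j then 1 else 0))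
     = prob_none_participates n \<alpha> Q"
proof -
  let ?h = "\<lambda>j b. if Q j \<and> b then 0 else (1::real)"
  have "(\<Prod>j<n. ?h j (j \<in> P)) = (if \<forall>j\<in>P. \<not> Q j then 1 else 0)" if "P \<in> Pow {..<n}" for P
    using that by (auto intro!: prod.neutral intro: prod_zero)
  then have "(\<Sum>P\<in>Pow {..<n}. participation_prob n \<alpha> P * (if \<forall>j\<in>P. \<not> Q j then 1 else 0))
     = (\<Sum>P\<in>Pow {..<n}. participation_prob n \<alpha> P * (\<Prod>j<n. ?h j (j \<in> P)))"
    by (intro sum.cong) auto
  also have "\<dots> = (\<Prod>j<n. \<alpha> j * ?h j True + (1 - \<alpha> j) * ?h j False)"
    by (rule sum_participation_prob_prod)
  also have "\<dots> = prob_none_participates n \<alpha> Q"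
    unfolding prob_none_participates_def by (intro prod.cong) auto
  finally show ?thesis .
qed

lemma sum_participation_prob_mono:
  assumes "\<alpha> ` {..<n} \<subseteq> {0..1}" "\<And>P. P \<subseteq> {..<n} \<Longrightarrow> X P \<le> Y P"
  shows "(\<Sum>P\<in>Pow {..<n}. participation_prob n \<alpha> P * X P)
      \<le> (\<Sum>P\<in>Pow {..<n}. participation_prob n \<alpha> P * Y P)"
  using assms by (intro sum_mono mult_left_mono participation_prob_nonneg) auto

section \<open>One round of the second price auction with reserve\<close>

definition round_reward ::
  "(nat option \<Rightarrow> real \<Rightarrow> real) \<Rightarrow> nat set \<Rightarrow> (nat \<Rightarrow> real) \<Rightarrow> real \<Rightarrow> real"
where
  "round_reward g P b r =
     (if sale P b r then (\<Sum>w\<in>winners P b. (1 / real (card (winners P b))) * g (Some w) (price P b r w))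
      else g None 0)"

definition exp_round_reward ::
  "nat \<Rightarrow> (nat \<Rightarrow> real) \<Rightarrow> (nat option \<Rightarrow> real \<Rightarrow> real) \<Rightarrow> (nat \<Rightarrow> real) \<Rightarrow> real \<Rightarrow> real"
where
  "exp_round_reward n \<alpha> g b r = (\<Sum>P\<in>Pow {..<n}. participation_prob n \<alpha> P * round_reward g P b r)"

definition bidder_reward :: "real \<Rightarrow> nat \<Rightarrow> nat option \<Rightarrow> real \<Rightarrow> real" where
  "bidder_reward vi i = (\<lambda>ow p. case ow of None \<Rightarrow> 0 | Some j \<Rightarrow> if j = i then vi - p else 0)"

definition seller_reward :: "nat option \<Rightarrow> real \<Rightarrow> real" where
  "seller_reward = (\<lambda>ow p. case ow of None \<Rightarrow> 0 | Some _ \<Rightarrow> p)"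

lemma winners_of_sale:
  assumes "finite P" "sale P b r"
  shows "winners P b \<noteq> {}" "finite (winners P b)" "winners P b \<subseteq> P"
proof -
  have "Max (b ` P) \<in> b ` P"
    using assms by (intro Max_in) (auto simp: sale_def)
  then show "winners P b \<noteq> {}"
    by (auto simp: winners_def)
  show "finite (winners P b)" "winners P b \<subseteq> P"
    using assms by (auto simp: winners_def)
qed

lemma average_le:
  fixes X :: "'a \<Rightarrow> real"
  assumes "finite W" "W \<noteq> {}" "\<And>w. w \<in> W \<Longrightarrow> X w \<le> c"
  shows "(\<Sum>w\<in>W. (1 / real (card W)) * X w) \<le> c"
proof -
  have "(\<Sum>w\<in>W. (1 / real (card W)) * X w) \<le> (\<Sum>w\<in>W. (1 / real (card W)) * c)"
    using assms by (intro sum_mono mult_left_mono) auto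
  also have "\<dots> = c"
    using assms by simp
  finally show ?thesis .
qed

lemma average_ge:
  fixes X :: "'a \<Rightarrow> real"
  assumes "finite W" "W \<noteq> {}" "\<And>w. w \<in> W \<Longrightarrow> c \<le> X w"
  shows "c \<le> (\<Sum>w\<in>W. (1 / real (card W)) * X w)"
  using average_le[of W "\<lambda>w. - X w" "- c"] assms by (simp add: sum_negf)

lemma price_cong: "(\<And>j. j \<in> P - {w} \<Longrightarrow> b j = b' j) \<Longrightarrow> price P b r w = price P b' r w"
  unfolding price_def by (metis (mono_tags, lifting) image_cong)

lemma reserve_le_price: "r \<le> price P b r w"
  by (simp add: price_def)

lemma price_reserve_mono:
  "r \<le> r' \<Longrightarrow> price P b r w \<le> price P b r' w \<and> price P b r' w \<le> price P b r w + (r' - r)"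
  by (auto simp: price_def max_def)

lemma sale_winner_iff_price_le:
  assumes "finite P" "i \<in> P"
  shows "sale P b r \<and> i \<in> winners P b \<longleftrightarrow> price P b r i \<le> b i"
proof
  assume "sale P b r \<and> i \<in> winners P b"
  then have "b i = Max (b ` P)" "r \<le> b i"
    by (auto simp: winners_def sale_def)
  moreover have "Max (b ` (P - {i})) \<le> Max (b ` P)" if "P - {i} \<noteq> {}"
    using assms that by (intro Max_mono) auto
  ultimately show "price P b r i \<le> b i"
    by (auto simp: price_def)
next
  assume le: "price P b r i \<le> b i"
  have others: "b j \<le> b i" if "j \<in> P - {i}" for j
  proof -
    have "b j \<le> Max (b ` (P - {i}))"
      using assms that by (intro Max_ge) auto
    then show ?thesis
      using le that by (auto simp: price_def split: if_splits)
  qed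
  have "Max (b ` P) = b i"
    using assms others by (intro Max_eqI) auto
  then show "sale P b r \<and> i \<in> winners P b"
    using assms le reserve_le_price[of r P b i] by (auto simp: sale_def winners_def)
qed

lemma winners_eq_singleton:
  assumes "finite P" "i \<in> winners P b" "price P b r i < b i"
  shows "winners P b = {i}"
proof -
  have "b j < b i" if "j \<in> P - {i}" for j
  proof -
    have "b j \<le> Max (b ` (P - {i}))"
      using assms that by (intro Max_ge) auto
    then show ?thesis
      using assms(3) that by (auto simp: price_def split: if_splits)
  qed
  then show ?thesis
    using assms(2) by (auto simp: winners_def) (metis less_irrefl)
qed

lemma round_reward_bidder:
  assumes "finite P"
  shows "round_reward (bidder_reward vi i) P b r
    = (if sale P b r \<and> i \<in> winners P b then (vi - price P b r i) / real (card (winners P b)) else 0)"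
proof (cases "sale P b r")
  case True
  have "(\<Sum>w\<in>winners P b. (1 / real (card (winners P b))) * bidder_reward vi i (Some w) (price P b r w))
      = (\<Sum>w\<in>winners P b. if w = i then (vi - price P b r i) / real (card (winners P b)) else 0)"
    by (intro sum.cong) (auto simp: bidder_reward_def)
  then show ?thesis
    using True winners_of_sale[OF assms True] by (simp add: round_reward_def sum.delta)
next
  case False
  then show ?thesis
    by (simp add: round_reward_def bidder_reward_def)
qed

lemma round_reward_bidder_le:
  assumes "finite P"
  shows "round_reward (bidder_reward vi i) P b r \<le> (if i \<in> P then max 0 (vi - price P b r i) else 0)"
proof (cases "sale P b r \<and> i \<in> winners P b")
  case True
  note W = winners_of_sale[OF assms conjunct1[OF True]]
  then have "1 \<le> real (card (winners P b))"
    by (simp add: Suc_leI card_gt_0_iff)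
  then have "(vi - price P b r i) / real (card (winners P b)) \<le> max 0 (vi - price P b r i)"
    by (cases "0 \<le> vi - price P b r i")
      (auto simp: divide_le_eq divide_le_0_iff mult_le_cancel_left1 mult_le_cancel_left2)
  then show ?thesis
    using True W by (auto simp: round_reward_bidder[OF assms])
next
  case False
  then show ?thesis
    by (auto simp: round_reward_bidder[OF assms])
qed

lemma round_reward_bidder_truthful:
  assumes "finite P" "b i = vi"
  shows "round_reward (bidder_reward vi i) P b r = (if i \<in> P then max 0 (vi - price P b r i) else 0)"
proof (cases "i \<in> P")
  case False
  then show ?thesis
    by (simp add: round_reward_bidder[OF assms(1)] winners_def)
next
  case True
  note win_iff = sale_winner_iff_price_le[OF assms(1) True, of b r]
  show ?thesis
  proof (cases "price P b r i < vi")
    case less: True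
    then have "winners P b = {i}"
      using win_iff assms by (intro winners_eq_singleton) auto
    then show ?thesis
      using less True win_iff assms by (simp add: round_reward_bidder[OF assms(1)])
  next
    case False
    then show ?thesis
      using True win_iff assms by (auto simp: round_reward_bidder[OF assms(1)])
  qed
qed

lemma round_reward_bidder_deviation_le:
  assumes "finite P" "v i = vi"
  shows "round_reward (bidder_reward vi i) P (v(i := \<beta>)) r \<le> round_reward (bidder_reward vi i) P v r"
proof -
  have "price P (v(i := \<beta>)) r i = price P v r i"
    by (rule price_cong) auto
  then have "round_reward (bidder_reward vi i) P (v(i := \<beta>)) r
      \<le> (if i \<in> P then max 0 (vi - price P v r i) else 0)"
    using round_reward_bidder_le[OF assms(1), of vi i "v(i := \<beta>)" r] by (simp only:)
  also have "\<dots> = round_reward (bidder_reward vi i) P v r"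
    using round_reward_bidder_truthful[of P v i vi r, OF assms] by simp
  finally show ?thesis .
qed

lemma exp_round_reward_bidder_deviation_le:
  assumes "\<alpha> ` {..<n} \<subseteq> {0..1}" "v i = vi"
  shows "exp_round_reward n \<alpha> (bidder_reward vi i) (v(i := \<beta>)) r
    \<le> exp_round_reward n \<alpha> (bidder_reward vi i) v r"
  unfolding exp_round_reward_def using assms
  by (intro sum_participation_prob_mono round_reward_bidder_deviation_le) (auto intro: finite_subset)

lemma round_reward_bidder_reserve_mono:
  assumes "finite P" "v i = vi" "rL \<le> rH"
  shows "round_reward (bidder_reward vi i) P v rH \<le> round_reward (bidder_reward vi i) P v rL"
    "round_reward (bidder_reward vi i) P v rL
       \<le> round_reward (bidder_reward vi i) P v rH + (if i \<in> P then rH - rL else 0)"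
  using round_reward_bidder_truthful[of P v i vi, OF assms(1,2)]
    price_reserve_mono[OF assms(3), of P v i] by (auto simp: max_def)

lemma round_reward_bidder_bounds:
  assumes "finite P" "v i = vi"
  shows "0 \<le> round_reward (bidder_reward vi i) P v r"
    "round_reward (bidder_reward vi i) P v r \<le> max 0 (vi - r)"
  using round_reward_bidder_truthful[of P v i vi, OF assms] reserve_le_price[of r P v i]
  by (auto simp: max_def)

lemma exp_round_reward_bidder_reserve_mono:
  assumes \<alpha>: "\<alpha> ` {..<n} \<subseteq> {0..1}" and "v i = vi" "i < n" "rL \<le> rH"
  shows "exp_round_reward n \<alpha> (bidder_reward vi i) v rH
      \<le> exp_round_reward n \<alpha> (bidder_reward vi i) v rL"
    "exp_round_reward n \<alpha> (bidder_reward vi i) v rL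
       \<le> exp_round_reward n \<alpha> (bidder_reward vi i) v rH + \<alpha> i * (rH - rL)"
proof -
  have mono: "round_reward (bidder_reward vi i) P v rH \<le> round_reward (bidder_reward vi i) P v rL"
    "round_reward (bidder_reward vi i) P v rL
       \<le> round_reward (bidder_reward vi i) P v rH + (if i \<in> P then rH - rL else 0)"
    if "P \<subseteq> {..<n}" for P
    using round_reward_bidder_reserve_mono[of P v i vi rL rH] that assms(2,4)
    by (simp_all add: finite_subset)
  show "exp_round_reward n \<alpha> (bidder_reward vi i) v rH \<le> exp_round_reward n \<alpha> (bidder_reward vi i) v rL"
    unfolding exp_round_reward_def using mono(1) by (intro sum_participation_prob_mono[OF \<alpha>]) auto
  have "exp_round_reward n \<alpha> (bidder_reward vi i) v rL
     \<le> (\<Sum>P\<in>Pow {..<n}. participation_prob n \<alpha> P *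
          (round_reward (bidder_reward vi i) P v rH + (if i \<in> P then rH - rL else 0)))"
    unfolding exp_round_reward_def using mono(2) by (intro sum_participation_prob_mono[OF \<alpha>]) auto
  also have "\<dots> = exp_round_reward n \<alpha> (bidder_reward vi i) v rH + \<alpha> i * (rH - rL)"
    using sum_participation_prob_member[OF \<open>i < n\<close>]
    by (simp add: exp_round_reward_def distrib_left sum.distrib)
  finally show "exp_round_reward n \<alpha> (bidder_reward vi i) v rL
       \<le> exp_round_reward n \<alpha> (bidder_reward vi i) v rH + \<alpha> i * (rH - rL)" .
qed

lemma exp_round_reward_bidder_bounds:
  assumes \<alpha>: "\<alpha> ` {..<n} \<subseteq> {0..1}" and "v i = vi"
  shows "0 \<le> exp_round_reward n \<alpha> (bidder_reward vi i) v r"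
    "exp_round_reward n \<alpha> (bidder_reward vi i) v r \<le> max 0 (vi - r)"
proof -
  have bounds: "0 \<le> round_reward (bidder_reward vi i) P v r"
    "round_reward (bidder_reward vi i) P v r \<le> max 0 (vi - r)" if "P \<subseteq> {..<n}" for P
    using round_reward_bidder_bounds[of P v i vi r] that assms(2) by (simp_all add: finite_subset)
  show "0 \<le> exp_round_reward n \<alpha> (bidder_reward vi i) v r"
    unfolding exp_round_reward_def using bounds(1)
    by (intro sum_nonneg mult_nonneg_nonneg participation_prob_nonneg[OF \<alpha>]) auto
  have "exp_round_reward n \<alpha> (bidder_reward vi i) v r
      \<le> (\<Sum>P\<in>Pow {..<n}. participation_prob n \<alpha> P * max 0 (vi - r))"
    unfolding exp_round_reward_def using bounds(2) by (intro sum_participation_prob_mono[OF \<alpha>]) auto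
  then show "exp_round_reward n \<alpha> (bidder_reward vi i) v r \<le> max 0 (vi - r)"
    by (simp only: sum_participation_prob_const)
qed

lemma round_reward_seller_nonneg:
  assumes "finite P" "0 \<le> r"
  shows "0 \<le> round_reward seller_reward P b r"
  using assms reserve_le_price[of r P b]
  by (auto simp: round_reward_def seller_reward_def
      intro!: sum_nonneg divide_nonneg_nonneg intro: order_trans)

lemma price_le_max_bid:
  assumes "finite P" "w \<in> P"
  shows "price P b r w \<le> max r (Max (b ` P))"
proof (cases "P - {w} = {}")
  case False
  then have "Max (b ` (P - {w})) \<le> Max (b ` P)"
    using assms by (intro Max_mono) auto
  then show ?thesis
    using False by (auto simp: price_def max_def)
qed (simp add: price_def)

lemma round_reward_seller_reserve_bounds:
  assumes fin: "finite P" and r: "0 \<le> rL" "rL \<le> rH"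
  shows "round_reward seller_reward P b rH - (rH - rL) \<le> round_reward seller_reward P b rL"
    "round_reward seller_reward P b rL \<le> round_reward seller_reward P b rH + rH"
proof -
  have nonneg: "0 \<le> round_reward seller_reward P b rL" "0 \<le> round_reward seller_reward P b rH"
    using round_reward_seller_nonneg[OF fin] r by auto
  have price: "price P b rL w \<le> price P b rH w" "price P b rH w - (rH - rL) \<le> price P b rL w" for w
    using price_reserve_mono[OF r(2), of P b w] by auto
  show "round_reward seller_reward P b rH - (rH - rL) \<le> round_reward seller_reward P b rL"
  proof (cases "sale P b rH")
    case True
    then have "sale P b rL"
      using r by (auto simp: sale_def)
    note W = winners_of_sale[OF fin True]
    have "round_reward seller_reward P b rH - (rH - rL)
       = (\<Sum>w\<in>winners P b. (1 / real (card (winners P b))) * (price P b rH w - (rH - rL)))"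
      using True W by (simp add: round_reward_def seller_reward_def right_diff_distrib sum_subtractf)
    also have "\<dots> \<le> round_reward seller_reward P b rL"
      using \<open>sale P b rL\<close> price
    by (auto simp: round_reward_def seller_reward_def intro!: sum_mono divide_right_mono)
    finally show ?thesis .
  next
    case False
    then show ?thesis
      using nonneg r by (simp add: round_reward_def seller_reward_def)
  qed
  show "round_reward seller_reward P b rL \<le> round_reward seller_reward P b rH + rH"
  proof (cases "sale P b rH")
    case True
    then have "sale P b rL"
      using r by (auto simp: sale_def)
    then show ?thesis
      using True price r
      by (auto simp: round_reward_def seller_reward_def
          intro!: sum_mono divide_right_mono add_increasing2)
  next
    case no_sale: False
    show ?thesis
    proof (cases "sale P b rL")
      case True
      note W = winners_of_sale[OF fin True]
      have "price P b rL w \<le> rH" if "w \<in> winners P b" for w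
        using price_le_max_bid[OF fin, of w b rL] that W(3) no_sale True r
        by (auto simp: sale_def)
      then have "(\<Sum>w\<in>winners P b. (1 / real (card (winners P b))) * price P b rL w) \<le> rH"
        by (rule average_le[OF W(2,1)])
      then have "round_reward seller_reward P b rL \<le> rH"
        using True by (simp add: round_reward_def seller_reward_def)
      then show ?thesis
        using nonneg by linarith
    next
      case False
      then show ?thesis
        using no_sale r by (simp add: round_reward_def seller_reward_def)
    qed
  qed
qed

lemma exp_round_reward_seller_reserve_bounds:
  assumes \<alpha>: "\<alpha> ` {..<n} \<subseteq> {0..1}" and r: "0 \<le> rL" "rL \<le> rH"
  shows "exp_round_reward n \<alpha> seller_reward b rH - (rH - rL) \<le> exp_round_reward n \<alpha> seller_reward b rL"
    "exp_round_reward n \<alpha> seller_reward b rL \<le> exp_round_reward n \<alpha> seller_reward b rH + rH"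
    "0 \<le> exp_round_reward n \<alpha> seller_reward b rL" "0 \<le> exp_round_reward n \<alpha> seller_reward b rH"
proof -
  have fin: "P \<subseteq> {..<n} \<Longrightarrow> finite P" for P
    by (rule finite_subset) auto
  note bounds = round_reward_seller_reserve_bounds[OF fin r]
  have bound1: "round_reward seller_reward P b rH + - (rH - rL) \<le> round_reward seller_reward P b rL"
    if "P \<subseteq> {..<n}" for P
    using bounds(1)[OF that, of b] by linarith
  have "exp_round_reward n \<alpha> seller_reward b rH - (rH - rL)
      = (\<Sum>P\<in>Pow {..<n}. participation_prob n \<alpha> P * (round_reward seller_reward P b rH + - (rH - rL)))"
    by (simp only: sum_participation_prob_add_const exp_round_reward_def)
  also have "\<dots> \<le> exp_round_reward n \<alpha> seller_reward b rL"
    unfolding exp_round_reward_def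
    by (rule sum_participation_prob_mono[OF \<alpha> bound1])
  finally show "exp_round_reward n \<alpha> seller_reward b rH - (rH - rL)
      \<le> exp_round_reward n \<alpha> seller_reward b rL" .
  have "exp_round_reward n \<alpha> seller_reward b rL
      \<le> (\<Sum>P\<in>Pow {..<n}. participation_prob n \<alpha> P * (round_reward seller_reward P b rH + rH))"
    unfolding exp_round_reward_def
    by (rule sum_participation_prob_mono[OF \<alpha> bounds(2)])
  then show "exp_round_reward n \<alpha> seller_reward b rL \<le> exp_round_reward n \<alpha> seller_reward b rH + rH"
    by (simp only: sum_participation_prob_add_const exp_round_reward_def)
  show "0 \<le> exp_round_reward n \<alpha> seller_reward b rL" "0 \<le> exp_round_reward n \<alpha> seller_reward b rH"
    unfolding exp_round_reward_def using r
    by (auto intro!: sum_nonneg mult_nonneg_nonneg participation_prob_nonneg[OF \<alpha>]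
        round_reward_seller_nonneg intro: fin)
qed

section \<open>The threshold mechanism round by round\<close>

definition bid_vector :: "nat set \<Rightarrow> (nat \<Rightarrow> real) \<Rightarrow> bidvec" where
  "bid_vector P b = (\<lambda>j. if j \<in> P then Some (b j) else None)"

definition triggered :: "real \<Rightarrow> bidvec list \<Rightarrow> bool" where
  "triggered \<rho> sh \<longleftrightarrow> (\<exists>bv \<in> set sh. \<exists>j b. bv j = Some b \<and> b > \<rho>)"

lemma threshold_mech_eq: "threshold_mech \<rho> rL rH sh = (if triggered \<rho> sh then rH else rL)"
  by (simp add: threshold_mech_def triggered_def)

lemma not_triggered_Nil [simp]: "\<not> triggered \<rho> []"
  by (simp add: triggered_def)

lemma triggered_append_bid_vector:
  "triggered \<rho> (sh @ [bid_vector P b]) \<longleftrightarrow> triggered \<rho> sh \<or> (\<exists>j\<in>P. \<rho> < b j)"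
  by (auto simp: triggered_def bid_vector_def split: if_splits)

lemma truthful_bids: "(\<lambda>j. truthful (v j) (hs j) r) = v"
  by (simp add: truthful_def)

lemma deviation_bids: "(\<lambda>j. ((\<lambda>_. truthful)(i := Bi)) j (v j) (hs j) r) = v(i := Bi (v i) (hs i) r)"
  by (auto simp: truthful_def)

lemma exp_total_Suc_participants:
  "exp_total n \<alpha> M B v g (Suc k) sh hs =
     (\<Sum>P\<in>Pow {..<n}. participation_prob n \<alpha> P *
       (let r = M sh; b = (\<lambda>j. B j (v j) (hs j) r) in
        if sale P b r then
          (\<Sum>w\<in>winners P b. (1 / real (card (winners P b))) *
             (g (Some w) (price P b r w) +
              exp_total n \<alpha> M B v g k (sh @ [bid_vector P b])
                (\<lambda>j. hs j @ [(r, j \<in> P, if j \<in> P then b j else 0, j = w,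
                              if j = w then price P b r w else 0)])))
        else g None 0 + exp_total n \<alpha> M B v g k (sh @ [bid_vector P b])
                (\<lambda>j. hs j @ [(r, j \<in> P, if j \<in> P then b j else 0, False, 0)])))"
  unfolding bid_vector_def by (simp add: participation_prob_def Let_def)

lemma round_continuation_le:
  assumes "finite P" "\<And>w. X w \<le> N" "Y \<le> N"
  shows "(if sale P b r then
           (\<Sum>w\<in>winners P b. (1 / real (card (winners P b))) * (g (Some w) (price P b r w) + X w))
          else g None 0 + Y) \<le> round_reward g P b r + N"
proof (cases "sale P b r")
  case True
  note W = winners_of_sale[OF assms(1) True]
  have "(\<Sum>w\<in>winners P b. (1 / real (card (winners P b))) * X w) \<le> N"
    using W assms(2) by (intro average_le) auto
  then show ?thesis
    using True by (simp add: round_reward_def distrib_left sum.distrib)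
qed (use assms in \<open>simp add: round_reward_def\<close>)

lemma round_continuation_ge:
  assumes "finite P" "\<And>w. N \<le> X w" "N \<le> Y"
  shows "round_reward g P b r + N \<le> (if sale P b r then
          (\<Sum>w\<in>winners P b. (1 / real (card (winners P b))) * (g (Some w) (price P b r w) + X w))
          else g None 0 + Y)"
proof (cases "sale P b r")
  case True
  note W = winners_of_sale[OF assms(1) True]
  have "N \<le> (\<Sum>w\<in>winners P b. (1 / real (card (winners P b))) * X w)"
    using W assms(2) by (intro average_ge) auto
  then show ?thesis
    using True by (simp add: round_reward_def distrib_left sum.distrib)
qed (use assms in \<open>simp add: round_reward_def\<close>)

lemma exp_total_Suc_le:
  assumes \<alpha>: "\<alpha> ` {..<n} \<subseteq> {0..1}"
    and next_le: "\<And>P hs'. P \<subseteq> {..<n} \<Longrightarrow>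
      exp_total n \<alpha> M B v g k (sh @ [bid_vector P (\<lambda>j. B j (v j) (hs j) (M sh))]) hs' \<le> N P"
  shows "exp_total n \<alpha> M B v g (Suc k) sh hs \<le>
     (\<Sum>P\<in>Pow {..<n}. participation_prob n \<alpha> P *
        (round_reward g P (\<lambda>j. B j (v j) (hs j) (M sh)) (M sh) + N P))"
  unfolding exp_total_Suc_participants Let_def using next_le
  by (intro sum_participation_prob_mono[OF \<alpha>] round_continuation_le) (auto intro: finite_subset)

lemma exp_total_Suc_ge:
  assumes \<alpha>: "\<alpha> ` {..<n} \<subseteq> {0..1}"
    and next_ge: "\<And>P hs'. P \<subseteq> {..<n} \<Longrightarrow>
      N P \<le> exp_total n \<alpha> M B v g k (sh @ [bid_vector P (\<lambda>j. B j (v j) (hs j) (M sh))]) hs'"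
  shows "(\<Sum>P\<in>Pow {..<n}. participation_prob n \<alpha> P *
      (round_reward g P (\<lambda>j. B j (v j) (hs j) (M sh)) (M sh) + N P))
     \<le> exp_total n \<alpha> M B v g (Suc k) sh hs"
  unfolding exp_total_Suc_participants Let_def using next_ge
  by (intro sum_participation_prob_mono[OF \<alpha>] round_continuation_ge) (auto intro: finite_subset)

lemma exp_total_Suc_eq:
  assumes "\<alpha> ` {..<n} \<subseteq> {0..1}"
    and "\<And>P hs'. P \<subseteq> {..<n} \<Longrightarrow>
      exp_total n \<alpha> M B v g k (sh @ [bid_vector P (\<lambda>j. B j (v j) (hs j) (M sh))]) hs' = N P"
  shows "exp_total n \<alpha> M B v g (Suc k) sh hs =
     (\<Sum>P\<in>Pow {..<n}. participation_prob n \<alpha> P *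
        (round_reward g P (\<lambda>j. B j (v j) (hs j) (M sh)) (M sh) + N P))"
  using exp_total_Suc_le[of \<alpha> n M B v g k sh hs N] exp_total_Suc_ge[of \<alpha> n N M B v g k sh hs] assms
  by fastforce

lemma exp_total_uminus:
  "exp_total n \<alpha> M B v (\<lambda>ow p. - g ow p) k sh hs = - exp_total n \<alpha> M B v g k sh hs"
proof (induction k arbitrary: sh hs)
  case (Suc k)
  have neg: "- x + - y = - (x + y)" "c * - x = - (c * x)"
    "(if b then - x else - y) = - (if b then x else y)"
    for b and c x y :: real
    by simp_all
  show ?case
    by (simp only: exp_total.simps Let_def Suc.IH neg sum_negf)
qed simp

lemma exp_round_reward_uminus:
  "exp_round_reward n \<alpha> (\<lambda>ow p. - g ow p) b r = - exp_round_reward n \<alpha> g b r"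
proof -
  have neg: "c * - x = - (c * x)" "(if b then - x else - y) = - (if b then x else y)"
    for b and c x y :: real
    by simp_all
  show ?thesis
    by (simp only: exp_round_reward_def round_reward_def neg sum_negf)
qed

lemma sum_power_Suc_shift: "(\<Sum>t<Suc k. (x::real) ^ t) = 1 + x * (\<Sum>t<k. x ^ t)"
  by (subst sum.lessThan_Suc_shift) (simp add: sum_distrib_left)

lemma exp_total_le_untriggered:
  assumes \<alpha>: "\<alpha> ` {..<n} \<subseteq> {0..1}" and "0 \<le> c"
    and round: "\<And>sh hs. exp_round_reward n \<alpha> g (\<lambda>j. B j (v j) (hs j) (M sh)) (M sh)
                  \<le> R + (if triggered \<rho> sh then 0 else c)"
    and trigger: "\<And>sh hs j. j < n \<Longrightarrow> Q j \<Longrightarrow> \<rho> < B j (v j) (hs j) (M sh)"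
  shows "exp_total n \<alpha> M B v g k sh hs
    \<le> real k * R + (if triggered \<rho> sh then 0 else c * (\<Sum>t<k. prob_none_participates n \<alpha> Q ^ t))"
proof (induction k arbitrary: sh hs)
  case (Suc k)
  define \<pi> where "\<pi> = prob_none_participates n \<alpha> Q"
  define D where "D = c * (\<Sum>t<k. \<pi> ^ t)"
  define b where "b = (\<lambda>j. B j (v j) (hs j) (M sh))"
  have "0 \<le> \<pi>"
    unfolding \<pi>_def prob_none_participates_def using \<alpha>
    by (intro prod_nonneg) (auto simp: image_subset_iff)
  then have "0 \<le> D"
    unfolding D_def using \<open>0 \<le> c\<close> by (intro mult_nonneg_nonneg sum_nonneg) auto
  have continuation: "(if triggered \<rho> (sh @ [bid_vector P b]) then 0 else D)
      \<le> (if triggered \<rho> sh then 0 else D * (if \<forall>j\<in>P. \<not> Q j then 1 else 0))" if "P \<subseteq> {..<n}" for P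
    using that trigger[where sh = sh and hs = hs] \<open>0 \<le> D\<close>
    by (auto simp: triggered_append_bid_vector b_def)
  have "exp_total n \<alpha> M B v g (Suc k) sh hs
     \<le> (\<Sum>P\<in>Pow {..<n}. participation_prob n \<alpha> P *
          (round_reward g P b (M sh)
           + (real k * R + (if triggered \<rho> (sh @ [bid_vector P b]) then 0 else D))))"
    unfolding b_def D_def \<pi>_def by (rule exp_total_Suc_le[OF \<alpha> Suc.IH])
  also have "\<dots> \<le> (\<Sum>P\<in>Pow {..<n}. participation_prob n \<alpha> P *
          (round_reward g P b (M sh) + real k * R
           + (if triggered \<rho> sh then 0 else D * (if \<forall>j\<in>P. \<not> Q j then 1 else 0))))"
    using continuation by (intro sum_participation_prob_mono[OF \<alpha>]) auto
  also have "\<dots> = exp_round_reward n \<alpha> g b (M sh) + real k * R + (if triggered \<rho> sh then 0 else D * \<pi>)"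
    using sum_participation_prob_avoid[of n \<alpha> Q]
    by (simp add: exp_round_reward_def \<pi>_def distrib_left sum.distrib sum_participation_prob_const
        sum_participation_prob sum_distrib_left[symmetric] mult_ac)
  also have "\<dots> \<le> real (Suc k) * R + (if triggered \<rho> sh then 0 else c * (\<Sum>t<Suc k. \<pi> ^ t))"
    using round[where sh = sh and hs = hs] unfolding sum_power_Suc_shift
    by (cases "triggered \<rho> sh") (simp_all add: b_def D_def algebra_simps)
  finally show ?case
    by (simp only: \<pi>_def)
qed simp

lemma exp_total_ge_untriggered:
  assumes \<alpha>: "\<alpha> ` {..<n} \<subseteq> {0..1}" and "0 \<le> c"
    and round: "\<And>sh hs. R - (if triggered \<rho> sh then 0 else c)
                  \<le> exp_round_reward n \<alpha> g (\<lambda>j. B j (v j) (hs j) (M sh)) (M sh)"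
    and trigger: "\<And>sh hs j. j < n \<Longrightarrow> Q j \<Longrightarrow> \<rho> < B j (v j) (hs j) (M sh)"
  shows "real k * R - (if triggered \<rho> sh then 0 else c * (\<Sum>t<k. prob_none_participates n \<alpha> Q ^ t))
    \<le> exp_total n \<alpha> M B v g k sh hs"
proof -
  have "exp_total n \<alpha> M B v (\<lambda>ow p. - g ow p) k sh hs
    \<le> real k * - R + (if triggered \<rho> sh then 0 else c * (\<Sum>t<k. prob_none_participates n \<alpha> Q ^ t))"
  proof (rule exp_total_le_untriggered[OF \<alpha> \<open>0 \<le> c\<close>])
    show "exp_round_reward n \<alpha> (\<lambda>ow p. - g ow p) (\<lambda>j. B j (v j) (hs j) (M sh)) (M sh)
        \<le> - R + (if triggered \<rho> sh then 0 else c)" for sh hs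
      using round[where sh = sh and hs = hs] by (simp add: exp_round_reward_uminus)
  qed (simp_all add: trigger)
  then show ?thesis
    by (simp add: exp_total_uminus algebra_simps)
qed

lemma exp_total_le_const:
  assumes "\<alpha> ` {..<n} \<subseteq> {0..1}"
    and "\<And>sh hs. exp_round_reward n \<alpha> g (\<lambda>j. B j (v j) (hs j) (M sh)) (M sh) \<le> R"
  shows "exp_total n \<alpha> M B v g k sh hs \<le> real k * R"
proof -
  have "exp_total n \<alpha> M B v g k sh hs
      \<le> real k * R
        + (if triggered 0 sh then 0 else 0 * (\<Sum>t<k. prob_none_participates n \<alpha> (\<lambda>_. False) ^ t))"
    by (rule exp_total_le_untriggered) (use assms in auto)
  then show ?thesis
    by (simp only: mult_zero_left if_cancel add_0_right diff_0_right)
qed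

lemma exp_total_ge_const:
  assumes "\<alpha> ` {..<n} \<subseteq> {0..1}"
    and "\<And>sh hs. R \<le> exp_round_reward n \<alpha> g (\<lambda>j. B j (v j) (hs j) (M sh)) (M sh)"
  shows "real k * R \<le> exp_total n \<alpha> M B v g k sh hs"
proof -
  have "real k * R
        - (if triggered 0 sh then 0 else 0 * (\<Sum>t<k. prob_none_participates n \<alpha> (\<lambda>_. False) ^ t))
      \<le> exp_total n \<alpha> M B v g k sh hs"
    by (rule exp_total_ge_untriggered) (use assms in auto)
  then show ?thesis
    by (simp only: mult_zero_left if_cancel add_0_right diff_0_right)
qed

lemma threshold_deviation_utility_le:
  assumes \<alpha>: "\<alpha> ` {..<n} \<subseteq> {0..1}" and "i < n" "v i = vi" "rL \<le> rH"
  shows "exp_total n \<alpha> (threshold_mech \<rho> rL rH) ((\<lambda>_. truthful)(i := Bi)) v (bidder_reward vi i) k sh hs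
    \<le> real k * exp_round_reward n \<alpha> (bidder_reward vi i) v rH
       + (if triggered \<rho> sh then 0
          else \<alpha> i * (rH - rL) * (\<Sum>t<k. prob_none_participates n \<alpha> (\<lambda>j. j \<noteq> i \<and> \<rho> < v j) ^ t))"
proof (rule exp_total_le_untriggered[OF \<alpha>])
  show "0 \<le> \<alpha> i * (rH - rL)"
    using \<alpha> \<open>i < n\<close> \<open>rL \<le> rH\<close> by (auto simp: image_subset_iff)
  fix sh hs
  let ?r = "threshold_mech \<rho> rL rH sh"
  have "exp_round_reward n \<alpha> (bidder_reward vi i) (v(i := Bi (v i) (hs i) ?r)) ?r
      \<le> exp_round_reward n \<alpha> (bidder_reward vi i) v ?r"
    by (rule exp_round_reward_bidder_deviation_le[where v = v and i = i, OF \<alpha> \<open>v i = vi\<close>])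
  also have "\<dots> \<le> exp_round_reward n \<alpha> (bidder_reward vi i) v rH
      + (if triggered \<rho> sh then 0 else \<alpha> i * (rH - rL))"
    using exp_round_reward_bidder_reserve_mono(2)[where v = v and i = i, OF \<alpha> assms(3,2,4)]
    by (simp add: threshold_mech_eq)
  finally show "exp_round_reward n \<alpha> (bidder_reward vi i)
        (\<lambda>j. ((\<lambda>_. truthful)(i := Bi)) j (v j) (hs j) ?r) ?r
      \<le> exp_round_reward n \<alpha> (bidder_reward vi i) v rH
        + (if triggered \<rho> sh then 0 else \<alpha> i * (rH - rL))"
    by (simp only: deviation_bids)
next
  fix sh hs j
  assume "j \<noteq> i \<and> \<rho> < v j"
  then show "\<rho> < ((\<lambda>_. truthful)(i := Bi)) j (v j) (hs j) (threshold_mech \<rho> rL rH sh)"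
    by (simp add: truthful_def)
qed

lemma threshold_deviation_utility_le_low_reserve:
  assumes \<alpha>: "\<alpha> ` {..<n} \<subseteq> {0..1}" and "i < n" "v i = vi" "rL \<le> rH"
  shows "exp_total n \<alpha> (threshold_mech \<rho> rL rH) ((\<lambda>_. truthful)(i := Bi)) v (bidder_reward vi i) k sh hs
    \<le> real k * exp_round_reward n \<alpha> (bidder_reward vi i) v rL"
proof (rule exp_total_le_const[OF \<alpha>])
  fix sh hs
  let ?r = "threshold_mech \<rho> rL rH sh"
  have "exp_round_reward n \<alpha> (bidder_reward vi i) (v(i := Bi (v i) (hs i) ?r)) ?r
      \<le> exp_round_reward n \<alpha> (bidder_reward vi i) v ?r"
    by (rule exp_round_reward_bidder_deviation_le[where v = v and i = i, OF \<alpha> \<open>v i = vi\<close>])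
  also have "\<dots> \<le> exp_round_reward n \<alpha> (bidder_reward vi i) v rL"
    using exp_round_reward_bidder_reserve_mono(1)[where v = v and i = i, OF \<alpha> assms(3,2,4)]
    by (simp add: threshold_mech_eq)
  finally show "exp_round_reward n \<alpha> (bidder_reward vi i)
        (\<lambda>j. ((\<lambda>_. truthful)(i := Bi)) j (v j) (hs j) ?r) ?r
      \<le> exp_round_reward n \<alpha> (bidder_reward vi i) v rL"
    by (simp only: deviation_bids)
qed

lemma threshold_truthful_utility_bounds:
  assumes \<alpha>: "\<alpha> ` {..<n} \<subseteq> {0..1}" and "i < n" "v i = vi" "rL \<le> rH"
  shows "real k * exp_round_reward n \<alpha> (bidder_reward vi i) v rH
      \<le> exp_total n \<alpha> (threshold_mech \<rho> rL rH) (\<lambda>_. truthful) v (bidder_reward vi i) k sh hs"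
    "0 \<le> exp_total n \<alpha> (threshold_mech \<rho> rL rH) (\<lambda>_. truthful) v (bidder_reward vi i) k sh hs"
    "exp_total n \<alpha> (threshold_mech \<rho> rL rH) (\<lambda>_. truthful) v (bidder_reward vi i) k sh hs
      \<le> real k * max 0 (vi - rL)"
proof -
  note mono = exp_round_reward_bidder_reserve_mono(1)[where v = v and i = i, OF \<alpha> assms(3,2,4)]
  note bounds = exp_round_reward_bidder_bounds[where v = v and i = i, OF \<alpha> \<open>v i = vi\<close>]
  show "real k * exp_round_reward n \<alpha> (bidder_reward vi i) v rH
      \<le> exp_total n \<alpha> (threshold_mech \<rho> rL rH) (\<lambda>_. truthful) v (bidder_reward vi i) k sh hs"
    using mono by (intro exp_total_ge_const[OF \<alpha>]) (simp add: truthful_bids threshold_mech_eq)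
  then show "0 \<le> exp_total n \<alpha> (threshold_mech \<rho> rL rH) (\<lambda>_. truthful) v (bidder_reward vi i) k sh hs"
    using bounds(1)[of rH] by (meson mult_nonneg_nonneg of_nat_0_le_iff order_trans)
  have "exp_round_reward n \<alpha> (bidder_reward vi i) v r \<le> max 0 (vi - rL)" if "r = rL \<or> r = rH" for r
    using that mono bounds(2)[of rL] by auto
  then show "exp_total n \<alpha> (threshold_mech \<rho> rL rH) (\<lambda>_. truthful) v (bidder_reward vi i) k sh hs
      \<le> real k * max 0 (vi - rL)"
    by (intro exp_total_le_const[OF \<alpha>]) (simp add: truthful_bids threshold_mech_eq)
qed

lemma threshold_revenue_ge_untriggered:
  assumes \<alpha>: "\<alpha> ` {..<n} \<subseteq> {0..1}" and r: "0 \<le> rL" "rL \<le> rH"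
  shows "real k * exp_round_reward n \<alpha> seller_reward v rH
      - (if triggered \<rho> sh then 0 else (rH - rL) * (\<Sum>t<k. prob_none_participates n \<alpha> (\<lambda>j. \<rho> < v j) ^ t))
    \<le> exp_total n \<alpha> (threshold_mech \<rho> rL rH) (\<lambda>_. truthful) v seller_reward k sh hs"
  using exp_round_reward_seller_reserve_bounds(1)[OF \<alpha> r]
  by (intro exp_total_ge_untriggered[OF \<alpha>]) (auto simp: truthful_bids threshold_mech_eq truthful_def r)

lemma threshold_revenue_bounds:
  assumes \<alpha>: "\<alpha> ` {..<n} \<subseteq> {0..1}" and r: "0 \<le> rL" "rL \<le> rH"
  shows "0 \<le> exp_total n \<alpha> (threshold_mech \<rho> rL rH) (\<lambda>_. truthful) v seller_reward k sh hs"
    "exp_total n \<alpha> (threshold_mech \<rho> rL rH) (\<lambda>_. truthful) v seller_reward k sh hs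
      \<le> real k * (exp_round_reward n \<alpha> seller_reward v rH + rH)"
proof -
  note bounds = exp_round_reward_seller_reserve_bounds[OF \<alpha> r]
  have "real k * 0 \<le> exp_total n \<alpha> (threshold_mech \<rho> rL rH) (\<lambda>_. truthful) v seller_reward k sh hs"
    using bounds(3,4) by (intro exp_total_ge_const[OF \<alpha>]) (simp add: truthful_bids threshold_mech_eq)
  then show "0 \<le> exp_total n \<alpha> (threshold_mech \<rho> rL rH) (\<lambda>_. truthful) v seller_reward k sh hs"
    by simp
  show "exp_total n \<alpha> (threshold_mech \<rho> rL rH) (\<lambda>_. truthful) v seller_reward k sh hs
      \<le> real k * (exp_round_reward n \<alpha> seller_reward v rH + rH)"
    using bounds(2) r by (intro exp_total_le_const[OF \<alpha>]) (simp add: truthful_bids threshold_mech_eq)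
qed

text \<open>Under truthful bidding the history matters only through whether the threshold has been
  crossed (flag \<open>\<tau>\<close>); this recursion makes the total a measurable function of the valuations.\<close>

fun threshold_truthful_total ::
  "nat \<Rightarrow> (nat \<Rightarrow> real) \<Rightarrow> real \<Rightarrow> real \<Rightarrow> real \<Rightarrow> (nat option \<Rightarrow> real \<Rightarrow> real) \<Rightarrow>
    nat \<Rightarrow> bool \<Rightarrow> (nat \<Rightarrow> real) \<Rightarrow> real"
where
  "threshold_truthful_total n \<alpha> \<rho> rL rH g 0 \<tau> v = 0"
| "threshold_truthful_total n \<alpha> \<rho> rL rH g (Suc k) \<tau> v =
     (\<Sum>P\<in>Pow {..<n}. participation_prob n \<alpha> P * (round_reward g P v (if \<tau> then rH else rL)
        + (if \<exists>j\<in>P. \<rho> < v j then threshold_truthful_total n \<alpha> \<rho> rL rH g k True v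
           else threshold_truthful_total n \<alpha> \<rho> rL rH g k \<tau> v)))"

lemma exp_total_threshold_truthful:
  assumes \<alpha>: "\<alpha> ` {..<n} \<subseteq> {0..1}"
  shows "exp_total n \<alpha> (threshold_mech \<rho> rL rH) (\<lambda>_. truthful) v g k sh hs
    = threshold_truthful_total n \<alpha> \<rho> rL rH g k (triggered \<rho> sh) v"
proof (induction k arbitrary: sh hs)
  case (Suc k)
  show ?case
    by (subst exp_total_Suc_eq[OF \<alpha>])
      (simp_all add: Suc.IH truthful_bids triggered_append_bid_vector threshold_mech_eq)
qed simp

lemma threshold_truthful_total_below_threshold:
  assumes "\<forall>j<n. v j \<le> \<rho>"
  shows "threshold_truthful_total n \<alpha> \<rho> rL rH g k False v = real k * exp_round_reward n \<alpha> g v rL"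
proof (induction k)
  case (Suc k)
  have "threshold_truthful_total n \<alpha> \<rho> rL rH g (Suc k) False v
      = (\<Sum>P\<in>Pow {..<n}. participation_prob n \<alpha> P *
          (round_reward g P v rL + real k * exp_round_reward n \<alpha> g v rL))"
    unfolding threshold_truthful_total.simps
  proof (rule sum.cong[OF refl])
    fix P assume "P \<in> Pow {..<n}"
    then have "\<not> (\<exists>j\<in>P. \<rho> < v j)"
      using assms by (auto simp: not_less)
    then show "participation_prob n \<alpha> P * (round_reward g P v (if False then rH else rL)
        + (if \<exists>j\<in>P. \<rho> < v j then threshold_truthful_total n \<alpha> \<rho> rL rH g k True v
           else threshold_truthful_total n \<alpha> \<rho> rL rH g k False v))
      = participation_prob n \<alpha> P * (round_reward g P v rL + real k * exp_round_reward n \<alpha> g v rL)"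
      using Suc.IH by simp
  qed
  also have "\<dots> = exp_round_reward n \<alpha> g v rL + real k * exp_round_reward n \<alpha> g v rL"
    by (simp only: sum_participation_prob_add_const exp_round_reward_def)
  finally show ?case
    by (simp add: algebra_simps)
qed simp

section \<open>Integration over the valuations\<close>

text \<open>The set of winners depends on the bids; written as a ratio of sums over the fixed set \<open>P\<close>
  the reward of a round is evidently measurable in the bids.\<close>

lemma round_reward_eq_ratio:
  assumes "finite P"
  shows "round_reward g P b r = (if P = {} then g None 0 else if r \<le> Max (b ` P) then
     (\<Sum>w\<in>P. if b w = Max (b ` P) then g (Some w) (price P b r w) else 0) /
     (\<Sum>w\<in>P. if b w = Max (b ` P) then 1 else 0) else g None 0)"
proof -
  have "winners P b = {w\<in>P. b w = Max (b ` P)}"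
    by (simp add: winners_def)
  then have "(\<Sum>w\<in>winners P b. g (Some w) (price P b r w))
        = (\<Sum>w\<in>P. if b w = Max (b ` P) then g (Some w) (price P b r w) else 0)"
      "real (card (winners P b)) = (\<Sum>w\<in>P. if b w = Max (b ` P) then 1 else 0)"
    using assms by (simp_all add: sum.inter_filter[symmetric])
  then show ?thesis
    by (simp add: round_reward_def sale_def sum_divide_distrib[symmetric])
qed

lemma measurable_round_reward:
  fixes \<phi> :: "'a \<Rightarrow> nat \<Rightarrow> real"
  assumes "finite P" "\<And>j. j \<in> P \<Longrightarrow> (\<lambda>w. \<phi> w j) \<in> borel_measurable Mx"
    and "\<And>j. g (Some j) \<in> borel_measurable borel"
  shows "(\<lambda>w. round_reward g P (\<phi> w) r) \<in> borel_measurable Mx"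
proof -
  have [measurable]: "\<And>j. j \<in> P \<Longrightarrow> (\<lambda>w. \<phi> w j) \<in> borel_measurable Mx"
    "\<And>j. g (Some j) \<in> borel_measurable borel"
    using assms by auto
  have [measurable]: "(\<lambda>w. Max ((\<lambda>j. \<phi> w j) ` P)) \<in> borel_measurable Mx"
    "\<And>k. (\<lambda>w. Max ((\<lambda>j. \<phi> w j) ` (P - {k}))) \<in> borel_measurable Mx"
    using assms(1) by (intro borel_measurable_Max; auto)+
  have [measurable]: "\<And>k. (\<lambda>w. price P (\<phi> w) r k) \<in> borel_measurable Mx"
    unfolding price_def by measurable
  show ?thesis
    unfolding round_reward_eq_ratio[OF assms(1)] by measurable
qed

lemma measurable_exp_round_reward:
  fixes \<phi> :: "'a \<Rightarrow> nat \<Rightarrow> real"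
  assumes "\<And>j. j < n \<Longrightarrow> (\<lambda>w. \<phi> w j) \<in> borel_measurable Mx"
    and "\<And>j. g (Some j) \<in> borel_measurable borel"
  shows "(\<lambda>w. exp_round_reward n \<alpha> g (\<phi> w) r) \<in> borel_measurable Mx"
  unfolding exp_round_reward_def using assms
  by (intro borel_measurable_sum borel_measurable_times borel_measurable_const measurable_round_reward)
    (auto intro: finite_subset)

lemma measurable_threshold_truthful_total:
  fixes \<phi> :: "'a \<Rightarrow> nat \<Rightarrow> real"
  assumes \<phi>: "\<And>j. j < n \<Longrightarrow> (\<lambda>w. \<phi> w j) \<in> borel_measurable Mx"
    and g: "\<And>j. g (Some j) \<in> borel_measurable borel"
  shows "(\<lambda>w. threshold_truthful_total n \<alpha> \<rho> rL rH g k \<tau> (\<phi> w)) \<in> borel_measurable Mx"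
proof (induction k arbitrary: \<tau>)
  case (Suc k)
  show ?case
    unfolding threshold_truthful_total.simps
  proof (rule borel_measurable_sum)
    fix P assume "P \<in> Pow {..<n}"
    then have P: "finite P" "\<And>j. j \<in> P \<Longrightarrow> (\<lambda>w. \<phi> w j) \<in> borel_measurable Mx"
      using \<phi> by (auto intro: finite_subset)
    note [measurable] = P(2) Suc.IH measurable_round_reward[where \<phi> = \<phi> and g = g, OF P g]
    have [measurable]: "Measurable.pred Mx (\<lambda>w. \<exists>j\<in>P. \<rho> < \<phi> w j)"
      using P(1) by measurable
    show "(\<lambda>w. participation_prob n \<alpha> P * (round_reward g P (\<phi> w) (if \<tau> then rH else rL) +
        (if \<exists>j\<in>P. \<rho> < \<phi> w j then threshold_truthful_total n \<alpha> \<rho> rL rH g k True (\<phi> w)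
         else threshold_truthful_total n \<alpha> \<rho> rL rH g k \<tau> (\<phi> w)))) \<in> borel_measurable Mx"
      by measurable
  qed
qed simp

lemma measurable_bidder_reward: "bidder_reward vi i (Some j) \<in> borel_measurable borel"
  by (cases "j = i") (simp_all add: bidder_reward_def)

lemma measurable_seller_reward: "seller_reward (Some j) \<in> borel_measurable borel"
  by (simp add: seller_reward_def)

lemma sets_valdist [simp]: "sets (valdist f s) = sets borel"
  by (simp add: valdist_def)

lemma AE_in_msupport:
  assumes "prob_space M" "sets M = sets borel"
  shows "AE x in M. x \<in> msupport M"
proof -
  interpret prob_space M by fact
  let ?F = "{ball x e | x e. 0 < e \<and> measure M (ball x e) = 0}"
  obtain F' where F': "F' \<subseteq> ?F" "countable F'" "\<Union>F' = \<Union>?F"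
    using Lindelof[of ?F] by auto
  have "(\<Union>B\<in>F'. id B) \<in> null_sets M"
  proof (rule null_sets_UN'[OF F'(2)])
    fix B assume "B \<in> F'"
    then obtain x e where B: "B = ball x e" "measure M (ball x e) = 0"
      using F'(1) by auto
    have "B \<in> sets M"
      using B assms(2) by simp
    then show "id B \<in> null_sets M"
      using B by (simp add: emeasure_eq_measure null_setsI)
  qed
  then have null: "\<Union>F' \<in> null_sets M"
    by simp
  show ?thesis
  proof (rule AE_I'[OF null])
    show "{x \<in> space M. x \<notin> msupport M} \<subseteq> \<Union>F'"
    proof
      fix x assume "x \<in> {x \<in> space M. x \<notin> msupport M}"
      then obtain e where e: "0 < e" "\<not> measure M (ball x e) > 0"
        by (auto simp: msupport_def)
      then have "measure M (ball x e) = 0"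
        using measure_nonneg[of M "ball x e"] by linarith
      then have "ball x e \<in> ?F"
        using e by auto
      moreover have "x \<in> ball x e"
        using e by simp
      ultimately show "x \<in> \<Union>F'"
        using F'(3) by blast
    qed
  qed
qed

lemma AE_PiM_all_le:
  assumes "prob_space M" "sets M = sets borel" "finite J" "msupport M \<subseteq> {..\<rho>}"
  shows "AE w in PiM J (\<lambda>_. M). \<forall>j\<in>J. w j \<le> \<rho>"
proof -
  have "AE z in M. z \<le> \<rho>"
    using AE_in_msupport[OF assms(1,2)] by eventually_elim (use assms(4) in auto)
  then show ?thesis
    using assms(1,3) by (intro AE_finite_allI AE_PiM_component) auto
qed

lemma measurable_component_borel:
  assumes "sets M = sets borel" "j \<in> I"
  shows "(\<lambda>w. w j) \<in> borel_measurable (PiM I (\<lambda>_. M))"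
  using measurable_component_singleton[OF assms(2), of "\<lambda>_. M"] measurable_cong_sets[OF refl assms(1)]
  by blast

lemma measurable_component_upd_borel:
  assumes "sets M = sets borel" "j \<in> insert i I"
  shows "(\<lambda>w. (w(i := vi)) j) \<in> borel_measurable (PiM I (\<lambda>_. M))"
proof (cases "j = i")
  case False
  then show ?thesis
    using assms measurable_component_borel[OF assms(1), of j I] by simp
qed simp

lemma integral_if_above:
  fixes M :: "real measure"
  assumes "prob_space M" "sets M = sets borel"
  shows "integrable M (\<lambda>z. if \<rho> < z then c else 1 :: real)"
    "(\<integral>z. (if \<rho> < z then c else 1) \<partial>M) = 1 - (1 - c) * (1 - measure M {..\<rho>})"
proof -
  interpret prob_space M by fact
  have space: "space M = UNIV"
    using sets_eq_imp_space_eq[OF assms(2)] by simp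
  have sets: "{\<rho><..} \<in> sets M" "{..\<rho>} \<in> sets M"
    using assms(2) by auto
  have "{\<rho><..} = space M - {..\<rho>}"
    unfolding space by auto
  then have compl: "measure M {\<rho><..} = 1 - measure M {..\<rho>}"
    by (simp only: prob_compl[OF sets(2)])
  have eq: "(\<lambda>z. if \<rho> < z then c else 1) = (\<lambda>z. 1 - (1 - c) * indicator {\<rho><..} z)"
    by (auto simp: indicator_def)
  have int: "integrable M (\<lambda>z. (1 - c) * indicator {\<rho><..} z :: real)"
    by (rule integrable_mult_right, rule integrable_real_indicator[OF sets(1)])
      (simp add: emeasure_eq_measure)
  then show "integrable M (\<lambda>z. if \<rho> < z then c else 1 :: real)"
    unfolding eq by (intro Bochner_Integration.integrable_diff integrable_const)
  have "(\<integral>z. 1 - (1 - c) * indicator {\<rho><..} z \<partial>M) = (\<integral>z. 1 \<partial>M) - (\<integral>z. (1 - c) * indicator {\<rho><..} z \<partial>M)"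
    by (rule Bochner_Integration.integral_diff[OF integrable_const int])
  also have "(\<integral>z. 1 \<partial>M) = (1::real)"
    using prob_space by simp
  also have "(\<integral>z. (1 - c) * indicator {\<rho><..} z \<partial>M) = (1 - c) * measure M {\<rho><..}"
    using space by simp
  finally show "(\<integral>z. (if \<rho> < z then c else 1) \<partial>M) = 1 - (1 - c) * (1 - measure M {..\<rho>})"
    unfolding eq compl .
qed

lemma integral_prod_if_above:
  fixes M :: "real measure" and c :: "nat \<Rightarrow> real"
  assumes "prob_space M" "sets M = sets borel" "finite J"
  shows "integrable (PiM J (\<lambda>_. M)) (\<lambda>w. \<Prod>j\<in>J. if \<rho> < w j then c j else 1)"
    "(\<integral>w. (\<Prod>j\<in>J. if \<rho> < w j then c j else 1) \<partial>PiM J (\<lambda>_. M))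
      = (\<Prod>j\<in>J. 1 - (1 - c j) * (1 - measure M {..\<rho>}))"
proof -
  interpret product_sigma_finite "\<lambda>_. M"
    using prob_space_imp_sigma_finite[OF assms(1)] by (simp add: product_sigma_finite_def)
  note step = integral_if_above[OF assms(1,2)]
  show "integrable (PiM J (\<lambda>_. M)) (\<lambda>w. \<Prod>j\<in>J. if \<rho> < w j then c j else 1)"
    by (rule product_integrable_prod[OF assms(3), of "\<lambda>j z. if \<rho> < z then c j else 1"]) (rule step(1))
  have "(\<integral>w. (\<Prod>j\<in>J. if \<rho> < w j then c j else 1) \<partial>PiM J (\<lambda>_. M))
      = (\<Prod>j\<in>J. \<integral>z. (if \<rho> < z then c j else 1) \<partial>M)"
    by (rule product_integral_prod[OF assms(3), of "\<lambda>j z. if \<rho> < z then c j else 1"]) (rule step(1))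
  also have "\<dots> = (\<Prod>j\<in>J. 1 - (1 - c j) * (1 - measure M {..\<rho>}))"
    by (simp only: step(2))
  finally show "(\<integral>w. (\<Prod>j\<in>J. if \<rho> < w j then c j else 1) \<partial>PiM J (\<lambda>_. M))
      = (\<Prod>j\<in>J. 1 - (1 - c j) * (1 - measure M {..\<rho>}))" .
qed

lemma utility_eq_integral:
  "utility n \<alpha> M T f i vi s Bi B =
     (\<integral>w. exp_total n \<alpha> M (B(i := Bi)) (w(i := vi)) (bidder_reward vi i) T [] (\<lambda>_. [])
        \<partial>PiM ({..<n} - {i}) (\<lambda>_. valdist f s))"
  by (simp add: utility_def bidder_reward_def)

lemma revenue_eq_integral:
  "revenue n \<alpha> M T f s =
     (\<integral>v. exp_total n \<alpha> M (\<lambda>_. truthful) v seller_reward T [] (\<lambda>_. []) \<partial>PiM {..<n} (\<lambda>_. valdist f s))"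
  by (simp add: revenue_def seller_reward_def)

lemma exp_total_one_round:
  assumes "\<alpha> ` {..<n} \<subseteq> {0..1}"
  shows "exp_total n \<alpha> M B v g 1 sh hs = exp_round_reward n \<alpha> g (\<lambda>j. B j (v j) (hs j) (M sh)) (M sh)"
proof -
  have "exp_total n \<alpha> M B v g (Suc 0) sh hs = (\<Sum>P\<in>Pow {..<n}. participation_prob n \<alpha> P *
      (round_reward g P (\<lambda>j. B j (v j) (hs j) (M sh)) (M sh) + 0))"
    by (rule exp_total_Suc_eq[OF assms]) simp
  then show ?thesis
    by (simp only: One_nat_def add_0_right exp_round_reward_def)
qed

lemma prob_none_participates_power:
  "prob_none_participates n \<alpha> Q ^ t = (\<Prod>j<n. if Q j then (1 - \<alpha> j) ^ t else 1)"
  unfolding prob_none_participates_def prod_power_distrib by (intro prod.cong) auto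

lemma prob_none_participates_others_power:
  assumes "i < n"
  shows "prob_none_participates n \<alpha> (\<lambda>j. j \<noteq> i \<and> \<rho> < (w(i := vi)) j) ^ t
    = (\<Prod>j\<in>{..<n} - {i}. if \<rho> < w j then (1 - \<alpha> j) ^ t else 1)"
  unfolding prob_none_participates_power using assms
  by (subst prod.remove[of _ i]) (auto intro!: prod.cong)

lemma expected_untriggered_rounds_nonneg:
  assumes "\<alpha> ` J \<subseteq> {0..1}" "0 \<le> p" "p \<le> 1"
  shows "0 \<le> expected_untriggered_rounds \<alpha> p J T"
  unfolding expected_untriggered_rounds_def
  using assms untriggered_factor_bounds(1)
  by (auto simp: image_subset_iff intro!: sum_nonneg prod_nonneg)

lemma integral_expected_untriggered_rounds:
  fixes M :: "real measure"
  assumes "prob_space M" "sets M = sets borel" "finite J"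
  shows "(\<Sum>t<T. \<integral>w. (\<Prod>j\<in>J. if \<rho> < w j then (1 - \<alpha> j) ^ t else 1) \<partial>PiM J (\<lambda>_. M))
    = expected_untriggered_rounds \<alpha> (1 - measure M {..\<rho>}) J T"
  by (simp add: expected_untriggered_rounds_def integral_prod_if_above[OF assms])

text \<open>A non-integrable function has Bochner integral 0, hence no integrability assumption on \<open>f\<close>.\<close>
lemma integral_le_integrable_bound:
  fixes f g :: "'a \<Rightarrow> real"
  assumes "integrable M g" "AE x in M. f x \<le> g x" "0 \<le> integral\<^sup>L M g"
  shows "integral\<^sup>L M f \<le> integral\<^sup>L M g"
  using assms integral_mono_AE[of M f g]
  by (cases "integrable M f") (auto simp: not_integrable_integral_eq)

lemma measurable_exp_total_threshold_truthful:
  fixes \<phi> :: "'a \<Rightarrow> nat \<Rightarrow> real"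
  assumes "\<alpha> ` {..<n} \<subseteq> {0..1}" "\<And>j. j < n \<Longrightarrow> (\<lambda>w. \<phi> w j) \<in> borel_measurable Mx"
    and "\<And>j. g (Some j) \<in> borel_measurable borel"
  shows "(\<lambda>w. exp_total n \<alpha> (threshold_mech \<rho> rL rH) (\<lambda>_. truthful) (\<phi> w) g k [] hs)
    \<in> borel_measurable Mx"
  unfolding exp_total_threshold_truthful[OF assms(1)] not_triggered_Nil
  by (rule measurable_threshold_truthful_total[where \<phi> = \<phi> and g = g, OF assms(2,3)])

lemma threshold_deviation_utility_le_truthful:
  assumes \<alpha>: "\<alpha> ` {..<n} \<subseteq> {0..1}" and "i < n" "rL \<le> rH"
  shows "exp_total n \<alpha> (threshold_mech \<rho> rL rH) ((\<lambda>_. truthful)(i := Bi)) (w(i := vi))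
      (bidder_reward vi i) T [] hs
    \<le> exp_total n \<alpha> (threshold_mech \<rho> rL rH) (\<lambda>_. truthful) (w(i := vi)) (bidder_reward vi i) T [] hs
      + \<alpha> i * (rH - rL) * (\<Sum>t<T. \<Prod>j\<in>{..<n} - {i}. if \<rho> < w j then (1 - \<alpha> j) ^ t else 1)"
  using threshold_deviation_utility_le[where v = "w(i := vi)" and i = i and \<rho> = \<rho> and Bi = Bi,
      OF \<alpha> \<open>i < n\<close> fun_upd_same \<open>rL \<le> rH\<close>, of T "[]" hs]
    threshold_truthful_utility_bounds(1)[where v = "w(i := vi)" and i = i and \<rho> = \<rho>,
      OF \<alpha> \<open>i < n\<close> fun_upd_same \<open>rL \<le> rH\<close>, of T "[]" hs]
  unfolding prob_none_participates_others_power[OF \<open>i < n\<close>] not_triggered_Nil[THEN Eq_FalseI] if_False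
  by linarith

section \<open>Incentive compatibility and revenue\<close>

lemma utility_truthful_eq_integral:
  "utility n \<alpha> M T f i vi s truthful (\<lambda>_. truthful) =
     (\<integral>w. exp_total n \<alpha> M (\<lambda>_. truthful) (w(i := vi)) (bidder_reward vi i) T [] (\<lambda>_. [])
        \<partial>PiM ({..<n} - {i}) (\<lambda>_. valdist f s))"
proof -
  have "(\<lambda>_::nat. truthful)(i := truthful) = (\<lambda>_. truthful)"
    by (rule fun_upd_idem) simp
  then show ?thesis
    by (simp only: utility_eq_integral)
qed

lemma threshold_truthful_utility_integrable:
  fixes \<rho> rL rH :: real
  assumes \<alpha>: "\<alpha> ` {..<n} \<subseteq> {0..1}" and i: "i < n" and r: "rL \<le> rH" and ps: "prob_space (valdist f s)"
  shows "integrable (PiM ({..<n} - {i}) (\<lambda>_. valdist f s))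
    (\<lambda>w. exp_total n \<alpha> (threshold_mech \<rho> rL rH) (\<lambda>_. truthful) (w(i := vi))
      (bidder_reward vi i) T [] (\<lambda>_. []))"
proof -
  interpret prob_space "PiM ({..<n} - {i}) (\<lambda>_. valdist f s)"
    using ps by (intro prob_space_PiM)
  have "(\<lambda>w. exp_total n \<alpha> (threshold_mech \<rho> rL rH) (\<lambda>_. truthful) (w(i := vi))
        (bidder_reward vi i) T [] (\<lambda>_. []))
      \<in> borel_measurable (PiM ({..<n} - {i}) (\<lambda>_. valdist f s))"
    by (intro measurable_exp_total_threshold_truthful[OF \<alpha>] measurable_component_upd_borel
        measurable_bidder_reward) auto
  then show ?thesis
    using threshold_truthful_utility_bounds(2,3)[OF \<alpha> i _ r]
    by (intro integrable_const_bound[where B = "real T * max 0 (vi - rL)"]) auto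
qed

lemma threshold_utility_deviation_le:
  fixes \<rho> rL rH :: real
  assumes \<alpha>: "\<alpha> ` {..<n} \<subseteq> {0..1}" and i: "i < n" and r: "rL \<le> rH" and ps: "prob_space (valdist f s)"
  shows "utility n \<alpha> (threshold_mech \<rho> rL rH) T f i vi s Bi (\<lambda>_. truthful)
    \<le> utility n \<alpha> (threshold_mech \<rho> rL rH) T f i vi s truthful (\<lambda>_. truthful)
      + \<alpha> i * (rH - rL) * expected_untriggered_rounds \<alpha> (1 - cdf f s \<rho>) ({..<n} - {i}) T"
proof -
  define I where "I = {..<n} - {i}"
  define Pm where "Pm = PiM I (\<lambda>_. valdist f s)"
  define Ut where "Ut w = exp_total n \<alpha> (threshold_mech \<rho> rL rH) (\<lambda>_. truthful) (w(i := vi))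
    (bidder_reward vi i) T [] (\<lambda>_. [])" for w
  define q where "q t w = (\<Prod>j\<in>I. if \<rho> < w j then (1 - \<alpha> j) ^ t else 1)" for t w
  have Ut_nonneg: "0 \<le> Ut w" for w
    unfolding Ut_def using threshold_truthful_utility_bounds(2)[OF \<alpha> i _ r] by simp
  have Ut_int: "integrable Pm Ut"
    unfolding Ut_def Pm_def I_def by (rule threshold_truthful_utility_integrable[OF \<alpha> i r ps])
  have utility_truthful:
    "utility n \<alpha> (threshold_mech \<rho> rL rH) T f i vi s truthful (\<lambda>_. truthful) = integral\<^sup>L Pm Ut"
    unfolding utility_truthful_eq_integral Ut_def Pm_def I_def ..
  have q_int: "integrable Pm (q t)" for t
    unfolding q_def Pm_def I_def by (rule integral_prod_if_above(1)[OF ps]) auto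
  have q_nonneg: "0 \<le> q t w" for t w
    unfolding q_def I_def using \<alpha> by (intro prod_nonneg) (auto simp: image_subset_iff)
  have bound_nonneg: "0 \<le> \<alpha> i * (rH - rL) * (\<Sum>t<T. q t w)" for w
    using \<alpha> i r q_nonneg by (intro mult_nonneg_nonneg sum_nonneg) (auto simp: image_subset_iff)
  have "utility n \<alpha> (threshold_mech \<rho> rL rH) T f i vi s Bi (\<lambda>_. truthful)
      \<le> (\<integral>w. Ut w + \<alpha> i * (rH - rL) * (\<Sum>t<T. q t w) \<partial>Pm)"
    unfolding utility_eq_integral Pm_def[symmetric] I_def[symmetric]
  proof (rule integral_le_integrable_bound)
    show "integrable Pm (\<lambda>w. Ut w + \<alpha> i * (rH - rL) * (\<Sum>t<T. q t w))"
      using Ut_int q_int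
      by (intro Bochner_Integration.integrable_add integrable_mult_right
          Bochner_Integration.integrable_sum)
    show "AE w in Pm. exp_total n \<alpha> (threshold_mech \<rho> rL rH) ((\<lambda>_. truthful)(i := Bi)) (w(i := vi))
        (bidder_reward vi i) T [] (\<lambda>_. []) \<le> Ut w + \<alpha> i * (rH - rL) * (\<Sum>t<T. q t w)"
      unfolding Ut_def q_def I_def by (intro AE_I2 threshold_deviation_utility_le_truthful[OF \<alpha> i r])
    show "0 \<le> (\<integral>w. Ut w + \<alpha> i * (rH - rL) * (\<Sum>t<T. q t w) \<partial>Pm)"
      using Ut_nonneg bound_nonneg by (intro integral_nonneg_AE AE_I2 add_nonneg_nonneg)
  qed
  also have "\<dots> = integral\<^sup>L Pm Ut + \<alpha> i * (rH - rL) * (\<Sum>t<T. integral\<^sup>L Pm (q t))"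
    using Ut_int q_int
    by (simp only: Bochner_Integration.integral_add integrable_mult_right
        Bochner_Integration.integrable_sum integral_mult_right_zero Bochner_Integration.integral_sum)
  also have "(\<Sum>t<T. integral\<^sup>L Pm (q t))
      = expected_untriggered_rounds \<alpha> (1 - cdf f s \<rho>) ({..<n} - {i}) T"
    unfolding q_def Pm_def I_def cdf_def by (rule integral_expected_untriggered_rounds[OF ps]) auto
  finally show ?thesis
    unfolding utility_truthful .
qed

lemma threshold_utility_deviation_le_below_threshold:
  fixes \<rho> rL rH :: real
  assumes \<alpha>: "\<alpha> ` {..<n} \<subseteq> {0..1}" and i: "i < n" and r: "rL \<le> rH" and ps: "prob_space (valdist f s)"
    and supp: "msupport (valdist f s) \<subseteq> {..\<rho>}" and "vi \<le> \<rho>"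
  shows "utility n \<alpha> (threshold_mech \<rho> rL rH) T f i vi s Bi (\<lambda>_. truthful)
    \<le> utility n \<alpha> (threshold_mech \<rho> rL rH) T f i vi s truthful (\<lambda>_. truthful)"
proof -
  define I where "I = {..<n} - {i}"
  define Pm where "Pm = PiM I (\<lambda>_. valdist f s)"
  define Ut where "Ut w = exp_total n \<alpha> (threshold_mech \<rho> rL rH) (\<lambda>_. truthful) (w(i := vi))
    (bidder_reward vi i) T [] (\<lambda>_. [])" for w
  have Ut_nonneg: "0 \<le> Ut w" for w
    unfolding Ut_def using threshold_truthful_utility_bounds(2)[OF \<alpha> i _ r] by simp
  have Ut_int: "integrable Pm Ut"
    unfolding Ut_def Pm_def I_def by (rule threshold_truthful_utility_integrable[OF \<alpha> i r ps])
  have utility_truthful: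
    "utility n \<alpha> (threshold_mech \<rho> rL rH) T f i vi s truthful (\<lambda>_. truthful) = integral\<^sup>L Pm Ut"
    unfolding utility_truthful_eq_integral Ut_def Pm_def I_def ..
  have below: "AE w in Pm. \<forall>j\<in>I. w j \<le> \<rho>"
    unfolding Pm_def I_def using ps supp by (intro AE_PiM_all_le) auto
  have "utility n \<alpha> (threshold_mech \<rho> rL rH) T f i vi s Bi (\<lambda>_. truthful) \<le> integral\<^sup>L Pm Ut"
    unfolding utility_eq_integral Pm_def[symmetric] I_def[symmetric]
  proof (rule integral_le_integrable_bound[OF Ut_int])
    show "AE w in Pm. exp_total n \<alpha> (threshold_mech \<rho> rL rH) ((\<lambda>_. truthful)(i := Bi)) (w(i := vi))
        (bidder_reward vi i) T [] (\<lambda>_. []) \<le> Ut w"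
      using below
    proof eventually_elim
      case (elim w)
      then have "\<forall>j<n. (w(i := vi)) j \<le> \<rho>"
        using \<open>vi \<le> \<rho>\<close> by (auto simp: I_def)
      then have "Ut w = real T * exp_round_reward n \<alpha> (bidder_reward vi i) (w(i := vi)) rL"
        unfolding Ut_def exp_total_threshold_truthful[OF \<alpha>] not_triggered_Nil[THEN Eq_FalseI]
        by (rule threshold_truthful_total_below_threshold)
      then show ?case
        using threshold_deviation_utility_le_low_reserve[where v = "w(i := vi)" and i = i,
            OF \<alpha> i fun_upd_same r] by simp
    qed
    show "0 \<le> integral\<^sup>L Pm Ut"
      using Ut_nonneg by (intro integral_nonneg_AE AE_I2)
  qed
  then show ?thesis
    unfolding utility_truthful .
qed

lemma revenue_one_round_eq_integral:
  assumes "\<alpha> ` {..<n} \<subseteq> {0..1}"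
  shows "revenue n \<alpha> (\<lambda>_. r) 1 f s
    = (\<integral>v. exp_round_reward n \<alpha> seller_reward v r \<partial>PiM {..<n} (\<lambda>_. valdist f s))"
  unfolding revenue_eq_integral exp_total_one_round[OF assms] truthful_bids ..

lemma threshold_revenue_below_threshold:
  fixes \<rho> rL rH :: real
  assumes \<alpha>: "\<alpha> ` {..<n} \<subseteq> {0..1}" and ps: "prob_space (valdist f s)"
    and supp: "msupport (valdist f s) \<subseteq> {..\<rho>}"
  shows "revenue n \<alpha> (threshold_mech \<rho> rL rH) T f s = real T * revenue n \<alpha> (\<lambda>_. rL) 1 f s"
proof -
  define Pm where "Pm = PiM {..<n} (\<lambda>_. valdist f s)"
  have comp: "\<And>j. j < n \<Longrightarrow> (\<lambda>v. v j) \<in> borel_measurable Pm"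
    unfolding Pm_def by (intro measurable_component_borel) auto
  have below: "AE v in Pm. \<forall>j\<in>{..<n}. v j \<le> \<rho>"
    unfolding Pm_def using ps supp by (intro AE_PiM_all_le) auto
  have "revenue n \<alpha> (threshold_mech \<rho> rL rH) T f s
      = (\<integral>v. real T * exp_round_reward n \<alpha> seller_reward v rL \<partial>Pm)"
    unfolding revenue_eq_integral Pm_def[symmetric]
  proof (rule integral_cong_AE)
    show "(\<lambda>v. exp_total n \<alpha> (threshold_mech \<rho> rL rH) (\<lambda>_. truthful) v seller_reward T [] (\<lambda>_. []))
        \<in> borel_measurable Pm"
      using comp by (intro measurable_exp_total_threshold_truthful[OF \<alpha>] measurable_seller_reward)
    show "(\<lambda>v. real T * exp_round_reward n \<alpha> seller_reward v rL) \<in> borel_measurable Pm"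
      using comp by (intro borel_measurable_times borel_measurable_const measurable_exp_round_reward
          measurable_seller_reward)
    show "AE v in Pm.
        exp_total n \<alpha> (threshold_mech \<rho> rL rH) (\<lambda>_. truthful) v seller_reward T [] (\<lambda>_. [])
        = real T * exp_round_reward n \<alpha> seller_reward v rL"
      using below
      by eventually_elim
        (simp add: exp_total_threshold_truthful[OF \<alpha>] threshold_truthful_total_below_threshold)
  qed
  then show ?thesis
    unfolding revenue_one_round_eq_integral[OF \<alpha>] Pm_def by simp
qed

lemma threshold_revenue_integrable:
  fixes \<rho> rL rH :: real
  assumes \<alpha>: "\<alpha> ` {..<n} \<subseteq> {0..1}" and r: "0 \<le> rL" "rL \<le> rH" and ps: "prob_space (valdist f s)"
    and int: "integrable (PiM {..<n} (\<lambda>_. valdist f s)) (\<lambda>v. exp_round_reward n \<alpha> seller_reward v rH)"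
  shows "integrable (PiM {..<n} (\<lambda>_. valdist f s))
    (\<lambda>v. exp_total n \<alpha> (threshold_mech \<rho> rL rH) (\<lambda>_. truthful) v seller_reward T [] (\<lambda>_. []))"
    (is "integrable ?M ?Rv")
proof (rule Bochner_Integration.integrable_bound)
  interpret prob_space ?M
    using ps by (intro prob_space_PiM)
  show "integrable ?M (\<lambda>v. real T * (exp_round_reward n \<alpha> seller_reward v rH + rH))"
    using int by (intro integrable_mult_right Bochner_Integration.integrable_add integrable_const) auto
  show "?Rv \<in> borel_measurable ?M"
  proof (rule measurable_exp_total_threshold_truthful[OF \<alpha>])
    show "(\<lambda>v. v j) \<in> borel_measurable ?M" if "j < n" for j
      using that by (intro measurable_component_borel) auto
  qed (rule measurable_seller_reward)
  show "AE v in ?M. norm (?Rv v) \<le> norm (real T * (exp_round_reward n \<alpha> seller_reward v rH + rH))"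
  proof (rule AE_I2)
    fix v
    note bounds = threshold_revenue_bounds[OF \<alpha> r, where \<rho> = \<rho> and k = T and sh = "[]" and v = v]
    have "norm (?Rv v) = ?Rv v"
      using bounds(1) by simp
    also have "\<dots> \<le> real T * (exp_round_reward n \<alpha> seller_reward v rH + rH)"
      by (rule bounds(2))
    finally show "norm (?Rv v) \<le> norm (real T * (exp_round_reward n \<alpha> seller_reward v rH + rH))"
      by simp
  qed
qed

lemma threshold_revenue_ge:
  fixes \<rho> rL rH :: real
  assumes \<alpha>: "\<alpha> ` {..<n} \<subseteq> {0..1}" and r: "0 \<le> rL" "rL \<le> rH" and ps: "prob_space (valdist f s)"
  shows "real T * revenue n \<alpha> (\<lambda>_. rH) 1 f s
      - (rH - rL) * expected_untriggered_rounds \<alpha> (1 - cdf f s \<rho>) {..<n} T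
    \<le> revenue n \<alpha> (threshold_mech \<rho> rL rH) T f s"
proof -
  define Pm where "Pm = PiM {..<n} (\<lambda>_. valdist f s)"
  define Rv where
    "Rv v = exp_total n \<alpha> (threshold_mech \<rho> rL rH) (\<lambda>_. truthful) v seller_reward T [] (\<lambda>_. [])"
    for v
  define S where "S v = exp_round_reward n \<alpha> seller_reward v rH" for v
  define q where "q t v = (\<Prod>j<n. if \<rho> < v j then (1 - \<alpha> j) ^ t else 1)" for t v
  interpret prob_space Pm
    unfolding Pm_def using ps by (intro prob_space_PiM)
  have q_int: "integrable Pm (q t)" for t
    unfolding q_def Pm_def by (rule integral_prod_if_above(1)[OF ps]) auto
  have rounds: "(\<Sum>t<T. integral\<^sup>L Pm (q t)) = expected_untriggered_rounds \<alpha> (1 - cdf f s \<rho>) {..<n} T"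
    unfolding q_def Pm_def cdf_def by (rule integral_expected_untriggered_rounds[OF ps]) auto
  have rounds_nonneg: "0 \<le> expected_untriggered_rounds \<alpha> (1 - cdf f s \<rho>) {..<n} T"
    using \<alpha> prob_space.prob_le_1[OF ps]
    by (intro expected_untriggered_rounds_nonneg) (auto simp: cdf_def)
  have Rv_bounds: "0 \<le> Rv v" "real T * S v - (rH - rL) * (\<Sum>t<T. q t v) \<le> Rv v" for v
    using threshold_revenue_bounds[OF \<alpha> r, where \<rho> = \<rho> and k = T and sh = "[]"]
      threshold_revenue_ge_untriggered[OF \<alpha> r, where \<rho> = \<rho> and k = T and sh = "[]"]
    by (auto simp: Rv_def S_def q_def prob_none_participates_power)
  have revenue_rH: "revenue n \<alpha> (\<lambda>_. rH) 1 f s = integral\<^sup>L Pm S"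
    unfolding revenue_one_round_eq_integral[OF \<alpha>] Pm_def S_def[abs_def] ..
  have revenue_threshold: "revenue n \<alpha> (threshold_mech \<rho> rL rH) T f s = integral\<^sup>L Pm Rv"
    unfolding revenue_eq_integral Pm_def Rv_def[abs_def] ..
  show ?thesis
  proof (cases "integrable Pm S")
    case True
    then have "integrable Pm Rv"
      unfolding Pm_def S_def[abs_def] Rv_def[abs_def] by (rule threshold_revenue_integrable[OF \<alpha> r ps])
    have "real T * integral\<^sup>L Pm S - (rH - rL) * (\<Sum>t<T. integral\<^sup>L Pm (q t))
        = (\<integral>v. real T * S v - (rH - rL) * (\<Sum>t<T. q t v) \<partial>Pm)"
      using True q_int by (simp add: Bochner_Integration.integral_sum)
    also have "\<dots> \<le> integral\<^sup>L Pm Rv"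
      using True q_int \<open>integrable Pm Rv\<close> Rv_bounds(2) by (intro Bochner_Integration.integral_mono) auto
    finally show ?thesis
      unfolding revenue_rH revenue_threshold rounds .
  next
    case False
    then have "revenue n \<alpha> (\<lambda>_. rH) 1 f s = 0"
      unfolding revenue_rH by (rule not_integrable_integral_eq)
    moreover have "0 \<le> revenue n \<alpha> (threshold_mech \<rho> rL rH) T f s"
      unfolding revenue_threshold using Rv_bounds(1) by (intro integral_nonneg_AE AE_I2)
    moreover have "0 \<le> (rH - rL) * expected_untriggered_rounds \<alpha> (1 - cdf f s \<rho>) {..<n} T"
      using rounds_nonneg r by simp
    ultimately show ?thesis
      by simp
  qed
qed

lemma expected_untriggered_rounds_le_of_thresholds:
  fixes \<epsilon> \<Delta> p \<alpha>min n0 T0 :: real and n T :: nat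
  assumes \<epsilon>: "0 < \<epsilon>" "\<epsilon> < \<Delta>" and p: "0 < p" "p \<le> 1"
    and \<alpha>: "\<alpha> ` {..<n} \<subseteq> {\<alpha>min..1}" "0 < \<alpha>min"
    and n0: "n0 = 1 + 1.59 * ln (2 * \<Delta> / \<epsilon>) / p" "n0 \<le> real n"
    and T0: "T0 = 2 * \<Delta> / \<epsilon> * of_int \<lceil>(n0 - 1) / ((real n - 1) * \<alpha>min)\<rceil>" "T0 \<le> real T"
    and J: "J \<subseteq> {..<n}" "real n - 1 \<le> real (card J)"
  shows "\<Delta> * expected_untriggered_rounds \<alpha> p J T \<le> \<epsilon> * real T"
proof -
  define x where "x = 2 * \<Delta> / \<epsilon>"
  define C where "C = nat \<lceil>(n0 - 1) / ((real n - 1) * \<alpha>min)\<rceil>"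
  have "2 < x"
    using \<epsilon> by (simp add: x_def field_simps)
  have "0 < 1.59 * ln x / p"
    using \<open>2 < x\<close> p by simp
  then have "1 < n0" "0 < real n - 1"
    using n0 by (simp_all add: x_def)
  then have "\<alpha>min \<le> 1"
    using \<alpha>(1) by (auto simp: image_subset_iff)
  have "0 < (n0 - 1) / ((real n - 1) * \<alpha>min)"
    using \<open>1 < n0\<close> \<open>0 < real n - 1\<close> \<alpha>(2) by simp
  then have C: "real C = of_int \<lceil>(n0 - 1) / ((real n - 1) * \<alpha>min)\<rceil>"
    by (simp add: C_def)
  have "expected_untriggered_rounds \<alpha> p J T \<le> 2 * real T / x"
  proof (rule expected_untriggered_rounds_le[where m = "real n - 1" and \<alpha>m = \<alpha>min and C = C])
    show "1.59 * ln x / p \<le> real n - 1" "(1.59 * ln x / p) / ((real n - 1) * \<alpha>min) \<le> real C"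
      using n0 C by (simp_all add: x_def)
    show "x * real C \<le> real T"
      using T0 C by (simp add: x_def)
    show "\<alpha>min \<le> \<alpha> j \<and> \<alpha> j \<le> 1" if "j \<in> J" for j
    proof -
      have "j < n"
        using that J(1) by auto
      then show ?thesis
        using \<alpha>(1) by (auto simp: image_subset_iff)
    qed
  qed (use \<open>2 < x\<close> p \<alpha>(2) \<open>\<alpha>min \<le> 1\<close> J(2) in auto)
  then show ?thesis
    using \<epsilon> \<open>2 < x\<close> by (simp add: x_def field_simps)
qed

lemma threshold_mech_eps_IC:
  fixes \<rho> rL rH \<epsilon> :: real
  assumes \<alpha>: "\<alpha> ` {..<n} \<subseteq> {0..1}" and r: "rL \<le> rH" and ps: "\<And>s. prob_space (valdist f s)"
    and low: "msupport (valdist f L) \<subseteq> {..\<rho>}" and "0 \<le> \<epsilon>"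
    and high: "\<And>J. J \<subseteq> {..<n} \<Longrightarrow> real n - 1 \<le> real (card J) \<Longrightarrow>
      (rH - rL) * expected_untriggered_rounds \<alpha> (1 - cdf f H \<rho>) J T \<le> \<epsilon> * real T"
  shows "eps_IC n \<alpha> (threshold_mech \<rho> rL rH) T f \<epsilon>"
  unfolding eps_IC_def eps_best_response_def
proof (intro allI impI ballI)
  fix i s vi Bi
  assume i: "i < n" and vi: "vi \<in> msupport (valdist f s)"
  have "0 \<le> real T * \<alpha> i * \<epsilon>"
    using \<alpha> i \<open>0 \<le> \<epsilon>\<close> by (auto simp: image_subset_iff)
  moreover have "utility n \<alpha> (threshold_mech \<rho> rL rH) T f i vi s Bi (\<lambda>_. truthful)
      \<le> utility n \<alpha> (threshold_mech \<rho> rL rH) T f i vi s truthful (\<lambda>_. truthful) + real T * \<alpha> i * \<epsilon>"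
  proof (cases s)
    case L
    then have "vi \<le> \<rho>"
      using vi low by auto
    then have "utility n \<alpha> (threshold_mech \<rho> rL rH) T f i vi s Bi (\<lambda>_. truthful)
        \<le> utility n \<alpha> (threshold_mech \<rho> rL rH) T f i vi s truthful (\<lambda>_. truthful)"
      unfolding L by (rule threshold_utility_deviation_le_below_threshold[OF \<alpha> i r ps low])
    then show ?thesis
      using \<open>0 \<le> real T * \<alpha> i * \<epsilon>\<close> by linarith
  next
    case H
    have "card ({..<n} - {i}) = n - 1"
      using i by simp
    then have "\<alpha> i * ((rH - rL) * expected_untriggered_rounds \<alpha> (1 - cdf f H \<rho>) ({..<n} - {i}) T)
        \<le> \<alpha> i * (\<epsilon> * real T)"
      using \<alpha> i high[of "{..<n} - {i}"] by (intro mult_left_mono) (auto simp: image_subset_iff)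
    then show ?thesis
      using threshold_utility_deviation_le[OF \<alpha> i r ps[of H], where \<rho> = \<rho> and T = T and vi = vi
          and Bi = Bi] H
      by (simp add: mult_ac)
  qed
  ultimately show "utility n \<alpha> (threshold_mech \<rho> rL rH) T f i vi s Bi (\<lambda>_. truthful) - real T * \<alpha> i * \<epsilon>
      \<le> utility n \<alpha> (threshold_mech \<rho> rL rH) T f i vi s truthful (\<lambda>_. truthful)"
    by linarith
qed

lemma threshold_mech_revenue_ge:
  fixes \<rho> rL rH \<epsilon> :: real
  assumes \<alpha>: "\<alpha> ` {..<n} \<subseteq> {0..1}" and r: "0 \<le> rL" "rL \<le> rH" and ps: "\<And>s. prob_space (valdist f s)"
    and low: "msupport (valdist f L) \<subseteq> {..\<rho>}" and "0 \<le> \<epsilon>"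
    and high: "(rH - rL) * expected_untriggered_rounds \<alpha> (1 - cdf f H \<rho>) {..<n} T \<le> \<epsilon> * real T"
  shows "(revenue n \<alpha> (\<lambda>_. if s = L then rL else rH) 1 f s - \<epsilon>) * real T
    \<le> revenue n \<alpha> (threshold_mech \<rho> rL rH) T f s"
proof (cases s)
  case L
  then show ?thesis
    using threshold_revenue_below_threshold[OF \<alpha> ps[of L] low, where rL = rL and rH = rH and T = T]
      \<open>0 \<le> \<epsilon>\<close>
    by (simp add: algebra_simps)
next
  case H
  then show ?thesis
    using threshold_revenue_ge[OF \<alpha> r ps[of H], where T = T and \<rho> = \<rho>] high by (simp add: algebra_simps)
qed

lemma Min_image_lessThan_bounds:
  fixes \<alpha> :: "nat \<Rightarrow> real"
  assumes "0 < n" "\<And>j. j < n \<Longrightarrow> 0 < \<alpha> j \<and> \<alpha> j \<le> 1"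
  shows "\<alpha> ` {..<n} \<subseteq> {Min (\<alpha> ` {..<n})..1}" "0 < Min (\<alpha> ` {..<n})"
proof -
  have "Min (\<alpha> ` {..<n}) \<le> \<alpha> j" if "j < n" for j
    using that by (intro Min_le) auto
  then show "\<alpha> ` {..<n} \<subseteq> {Min (\<alpha> ` {..<n})..1}"
    using assms(2) by (auto simp: image_subset_iff)
  have "Min (\<alpha> ` {..<n}) \<in> \<alpha> ` {..<n}"
    using assms(1) by (intro Min_in) auto
  then show "0 < Min (\<alpha> ` {..<n})"
    using assms(2) by auto
qed

lemma cdf_bounds:
  assumes "prob_space (valdist f s)"
  shows "0 \<le> cdf f s x" "cdf f s x \<le> 1"
  unfolding cdf_def using prob_space.prob_le_1[OF assms] by auto

lemma virtual_value_root_nonneg: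
  assumes "prob_space (valdist f s)" "0 \<le> f s r" "virtual_value f s r = 0"
  shows "0 \<le> r"
proof -
  have "r = (1 - cdf f s r) / f s r"
    using assms(3) by (simp add: virtual_value_def)
  also have "0 \<le> \<dots>"
    using cdf_bounds[OF assms(1)] assms(2) by simp
  finally show ?thesis .
qed

theorem theorem2:
  fixes n T :: nat and \<alpha> :: "nat \<Rightarrow> real" and f :: "itype \<Rightarrow> real \<Rightarrow> real"
    and Lbar \<epsilon> \<rho> rL rH \<alpha>min n0 T0 :: real
  assumes "1 \<le> n" and "1 < T"
    and dens: "\<And>s. f s \<in> borel_measurable borel"
    and dens_nonneg: "\<And>s x. 0 \<le> f s x"
    and dens_prob: "\<And>s. prob_space (valdist f s)"
    and part: "\<And>i. i < n \<Longrightarrow> 0 < \<alpha> i \<and> \<alpha> i \<le> 1"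
    and regL: "regular f L" and regH: "regular f H"
    and suppL: "msupport (valdist f L) \<subseteq> {0..Lbar}"
    and rL: "rL \<in> msupport (valdist f L)" "virtual_value f L rL = 0"
            "\<And>r. r \<in> msupport (valdist f L) \<Longrightarrow> virtual_value f L r = 0 \<Longrightarrow> r = rL"
    and rH: "rH \<in> msupport (valdist f H)" "virtual_value f H rH = 0"
            "\<And>r. r \<in> msupport (valdist f H) \<Longrightarrow> virtual_value f H r = 0 \<Longrightarrow> r = rH"
    and eps: "0 < \<epsilon>" "\<epsilon> < rH - rL"
    and alpha_min: "\<alpha>min = Min (\<alpha> ` {..<n})"
    and rho: "Lbar \<le> \<rho>" "0 < 1 - cdf f H \<rho>"
    and n0_def: "n0 = 1 + 1.59 * ln (2 * (rH - rL) / \<epsilon>) / (1 - cdf f H \<rho>)"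
    and T0_def: "T0 = 2 * (rH - rL) / \<epsilon> * of_int \<lceil>(n0 - 1) / ((real n - 1) * \<alpha>min)\<rceil>"
    and "n0 \<le> real n" and "T0 \<le> real T"
  shows "eps_IC n \<alpha> (threshold_mech \<rho> rL rH) T f \<epsilon>
       \<and> (\<forall>s. (revenue n \<alpha> (\<lambda>_. if s = L then rL else rH) 1 f s - \<epsilon>) * real T
               \<le> revenue n \<alpha> (threshold_mech \<rho> rL rH) T f s)"
proof -
  have \<alpha>: "\<alpha> ` {..<n} \<subseteq> {0..1}"
    using part by (auto simp: image_subset_iff less_imp_le)
  have \<alpha>min: "\<alpha> ` {..<n} \<subseteq> {\<alpha>min..1}" "0 < \<alpha>min"
    using Min_image_lessThan_bounds[of n \<alpha>, OF _ part] \<open>1 \<le> n\<close> unfolding alpha_min by simp_all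
  have r: "0 \<le> rL" "rL \<le> rH"
    using virtual_value_root_nonneg[OF dens_prob dens_nonneg rL(2)] eps by auto
  have low: "msupport (valdist f L) \<subseteq> {..\<rho>}"
    using suppL rho(1) by auto
  have high: "(rH - rL) * expected_untriggered_rounds \<alpha> (1 - cdf f H \<rho>) J T \<le> \<epsilon> * real T"
    if "J \<subseteq> {..<n}" "real n - 1 \<le> real (card J)" for J
    using cdf_bounds(1)[OF dens_prob]
    by (intro expected_untriggered_rounds_le_of_thresholds[OF eps rho(2) _ \<alpha>min n0_def \<open>n0 \<le> real n\<close>
          T0_def \<open>T0 \<le> real T\<close> that]) simp
  show ?thesis
    using threshold_mech_eps_IC[OF \<alpha> r(2) dens_prob low _ high]
      threshold_mech_revenue_ge[OF \<alpha> r dens_prob low _ high]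
      eps(1) by auto
qed

end
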